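(* Let $T>0$, $A\in C([0,T];\mathbb{R}^{n\times n})$, $B\in C([0,T];\mathbb{R}^{n\times m})$, $p\in\mathbb{R}^m$, $P\in\mathbb{S}^m_{++}$, $x_e\in\mathbb{R}^n$, $X_e\in\mathbb{S}^n_{++}$, and consider the system $\dot{x}(s)=A(s)x(s)+B(s)u(s)$ with input set $\mathbb{U}=\mathcal{E}(p,P)$ and terminal set $\mathcal{X}=\mathcal{E}(x_e,X_e)$. Let $n_q\in\mathbb{N}$, $\kappa_i\in C([0,T];\mathbb{R}_{>0})$ for $i\in\{1,\dots,n_q\}$, and let $(q_i,Q_i)$ be the (unique, with $Q_i(t)\in\mathbb{S}^n_{++}$) solution of $$\dot{q}_i=Aq_i+Bp,\quad \dot{Q}_i=AQ_i+Q_iA^T-\Big(\tfrac{1}{\kappa_i}BPB^T+\kappa_iQ_i\Big),\quad q_i(T)=x_e,\ Q_i(T)=X_e.$$ Fix $t\in[0,T]$, $i\in\{1,\dots,n_q\}$, and let $u^\star\in\mathcal{U}[t,T]$ and $x^\star$ satisfy for a.e. $s\in(t,T)$ $$\dot{x}^\star(s)=A(s)x^\star(s)+B(s)u^\star(s),\quad x^\star(T)\in\partial\mathcal{X},\quad u^\star(s)\in\arg\max_{u\in\mathbb{U}}\langle -Q_i(s)^{-1/2}\hat{w}_i(s),B(s)u\rangle,$$ where $\hat{w}_i(s)=Q_i(s)^{-1/2}(x^\star(s)-q_i(s))$. Let $\mathcal{Q}_{i,\star}(s)=Q_i(s)^{-1/2}B(s)PB^T(s)Q_i(s)^{-1/2}$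 and suppose $$\kappa_i(s)=\frac{\|\mathcal{Q}_{i,\star}(s)^{1/2}\hat{w}_i(s)\|_2}{\|\hat{w}_i(s)\|_2}$$ for all $s\in[t,T]$ with $\hat{w}_i(s)\neq 0$. Then $x^\star(t)\in\partial\mathcal{E}(q_i(t),Q_i(t))\cap\partial\mathcal{G}(t)$.
   Context: $\mathbb{S}^n_{++}$ denotes the symmetric positive definite $n\times n$ matrices; $M^{1/2}$ is the symmetric positive semidefinite square root of a symmetric positive semidefinite $M$, $M^{-1/2}$ its inverse when $M$ is positive definite. For $q\in\mathbb{R}^n$, $Q\in\mathbb{S}^n_{++}$, $\mathcal{E}(q,Q)=\{x\in\mathbb{R}^n\,|\,\langle x-q,Q^{-1}(x-q)\rangle\le 1\}$; $\partial$ denotes topological boundary. $\mathcal{U}[t,T]$ is the set of measurable maps $u:[t,T]\to\mathbb{U}$. The backwards reachable set is $\mathcal{G}(t)=\{x\in\mathbb{R}^n\,|\,\exists u\in\mathcal{U}[t,T]$ such that the absolutely continuous solution of $\dot{x}=Ax+Bu$ with $x(t)=x$ satisfies $x(T)\in\mathcal{X}\}$. *)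

theory Defs
  imports "HOL-Analysis.Analysis"
begin

definition spd :: "real^'n^'n \<Rightarrow> bool" where
  "spd M \<longleftrightarrow> transpose M = M \<and> (\<forall>x. x \<noteq> 0 \<longrightarrow> x \<bullet> (M *v x) > 0)"

definition spsd :: "real^'n^'n \<Rightarrow> bool" where
  "spsd M \<longleftrightarrow> transpose M = M \<and> (\<forall>x. x \<bullet> (M *v x) \<ge> 0)"

definition msqrt :: "real^'n^'n \<Rightarrow> real^'n^'n" where
  "msqrt M = (THE R. spsd R \<and> R ** R = M)"

definition minvsqrt :: "real^'n^'n \<Rightarrow> real^'n^'n" where
  "minvsqrt M = matrix_inv (msqrt M)"

definition ellipsoid :: "real^'n \<Rightarrow> real^'n^'n \<Rightarrow> (real^'n) set" where
  "ellipsoid q Q = {x. (x - q) \<bullet> (matrix_inv Q *v (x - q)) \<le> 1}"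

definition abs_continuous_on :: "real \<Rightarrow> real \<Rightarrow> (real \<Rightarrow> 'a::real_normed_vector) \<Rightarrow> bool" where
  "abs_continuous_on a b f \<longleftrightarrow>
     (\<forall>e>0. \<exists>d>0. \<forall>(N::nat) (l::nat \<Rightarrow> real) (r::nat \<Rightarrow> real).
        (\<forall>k<N. a \<le> l k \<and> l k \<le> r k \<and> r k \<le> b) \<and>
        (\<forall>k<N. \<forall>j<N. k \<noteq> j \<longrightarrow> r k \<le> l j \<or> r j \<le> l k) \<and>
        (\<Sum>k<N. r k - l k) < d
        \<longrightarrow> (\<Sum>k<N. norm (f (r k) - f (l k))) < e)"

definition admissible_controls :: "real \<Rightarrow> real \<Rightarrow> ('m::euclidean_space) set \<Rightarrow> (real \<Rightarrow> 'm) set" where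
  "admissible_controls t T U =
     {u. u \<in> borel_measurable (restrict_space lebesgue {t..T}) \<and> (\<forall>s\<in>{t..T}. u s \<in> U)}"

definition is_solution ::
  "(real \<Rightarrow> real^'n^'n) \<Rightarrow> (real \<Rightarrow> real^'m^'n) \<Rightarrow> real \<Rightarrow> real \<Rightarrow>
   (real \<Rightarrow> real^'m) \<Rightarrow> (real \<Rightarrow> real^'n) \<Rightarrow> bool" where
  "is_solution A B t T u x \<longleftrightarrow>
     abs_continuous_on t T x \<and>
     (AE s in lebesgue. s \<in> {t<..<T} \<longrightarrow>
        (x has_vector_derivative (A s *v x s + B s *v u s)) (at s))"

definition backward_reach ::
  "(real \<Rightarrow> real^'n^'n) \<Rightarrow> (real \<Rightarrow> real^'m^'n) \<Rightarrow> (real^'m) set \<Rightarrow> (real^'n) set \<Rightarrow>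
   real \<Rightarrow> real \<Rightarrow> (real^'n) set" where
  "backward_reach A B U X T t =
     {x0. \<exists>u\<in>admissible_controls t T U. \<exists>x. is_solution A B t T u x \<and> x t = x0 \<and> x T \<in> X}"

end

theory Submission
  imports Defs
begin

(*
  Along any trajectory x with input u, the level V = (x - q)' Q^-1 (x - q) of the tube
  (q, Q) = (q_i, Q_i) is absolutely continuous, and the Riccati equation for Q gives, almost
  everywhere,
      V' = 2 d.(u - p) + d.(P d) / kappa + kappa V,     d = B' Q^-1 (x - q).
  For u in E(p, P) one has d.(u - p) >= -a with a = sqrt (d.(P d)), hence
  V' >= (a - kappa)^2 / kappa >= 0 wherever V >= 1: a trajectory that starts outside
  E(q(t), Q(t)) never enters the terminal ellipsoid E(q(T), Q(T)), so G(t) is contained in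
  E(q(t), Q(t)).
  For the maximising input the bound is attained, d.(u - p) = -a, and the choice of kappa
  means kappa = a / sqrt V, so that (V - 1) V' = 2 a (sqrt V + 1) (sqrt V - 1)^2 >= 0.
  Thus (V - 1)^2 is nondecreasing on [t, T] and vanishes at T, so V(t) = 1: x*(t) lies on
  the boundary of E(q(t), Q(t)), and since it belongs to G(t), also on the boundary of G(t).
  Monotonicity of absolutely continuous functions with almost everywhere nonnegative
  derivative is obtained from Lusin's property (N).
*)

section \<open>Symmetric matrices and their square roots\<close>

lemma inner_matrix_vector_transpose: "(x::real^'n) \<bullet> (A *v y) = (transpose A *v x) \<bullet> y"
  by (simp add: dot_lmul_matrix)

lemma inner_symmetric_matrix_vector:
  "transpose M = M \<Longrightarrow> (x::real^'n) \<bullet> (M *v y) = (M *v x) \<bullet> y"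
  by (metis inner_matrix_vector_transpose)

lemma
  assumes "invertible (A::'a::semiring_1^'n^'m)"
  shows matrix_inv_right: "A ** matrix_inv A = mat 1"
    and matrix_inv_left: "matrix_inv A ** A = mat 1"
  using someI_ex[OF assms[unfolded invertible_def]] unfolding matrix_inv_def by auto

lemma matrix_inv_vector_cancel_left:
  "invertible (A::real^'n^'n) \<Longrightarrow> matrix_inv A *v (A *v x) = x"
  by (simp add: matrix_inv_left matrix_vector_mul_assoc)

lemma matrix_inv_vector_cancel_right:
  "invertible (A::real^'n^'n) \<Longrightarrow> A *v (matrix_inv A *v x) = x"
  by (simp add: matrix_inv_right matrix_vector_mul_assoc)

lemma matrix_inv_unique:
  fixes A B :: "real^'n^'n"
  assumes "invertible A" and "B ** A = mat 1"
  shows "matrix_inv A = B"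
proof -
  have "matrix_inv A = (B ** A) ** matrix_inv A" by (simp add: assms(2))
  also have "\<dots> = B" by (simp add: matrix_inv_right[OF assms(1)] flip: matrix_mul_assoc)
  finally show ?thesis .
qed

lemma symmetric_matrix_inv:
  fixes A :: "real^'n^'n"
  assumes "invertible A" and "transpose A = A"
  shows "transpose (matrix_inv A) = matrix_inv A"
proof (rule matrix_inv_unique[symmetric, OF assms(1)])
  show "transpose (matrix_inv A) ** A = mat 1"
    by (metis assms matrix_inv_right matrix_transpose_mul transpose_mat)
qed

lemma invertible_if_kernel_trivial:
  fixes A :: "real^'n^'n"
  assumes "\<And>x. A *v x = 0 \<Longrightarrow> x = 0"
  shows "invertible A"
proof -
  have "inj ((*v) A)"
  proof (rule injI)
    fix x y assume "A *v x = A *v y"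
    then have "A *v (x - y) = 0" by (simp add: matrix_vector_mult_diff_distrib)
    then show "x = y" using assms by fastforce
  qed
  then show ?thesis
    using invertible_left_inverse matrix_left_invertible_injective by blast
qed

lemma spd_imp_invertible: "spd (Q::real^'n^'n) \<Longrightarrow> invertible Q"
  unfolding spd_def by (rule invertible_if_kernel_trivial) (metis inner_zero_right less_irrefl)

lemma spd_imp_spsd: "spd M \<Longrightarrow> spsd M"
  unfolding spd_def spsd_def by (metis inner_zero_left order_le_less)

lemma spd_matrix_inv:
  assumes Q: "spd (Q::real^'n^'n)"
  shows "spd (matrix_inv Q)"
  unfolding spd_def
proof (intro conjI allI impI)
  have inv: "invertible Q" using Q by (rule spd_imp_invertible)
  then show "transpose (matrix_inv Q) = matrix_inv Q"
    using Q symmetric_matrix_inv spd_def by blast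
  fix x :: "real^'n" assume "x \<noteq> 0"
  define y where "y = matrix_inv Q *v x"
  have "Q *v y = x" unfolding y_def using inv by (rule matrix_inv_vector_cancel_right)
  with \<open>x \<noteq> 0\<close> have "y \<noteq> 0" by auto
  then have "y \<bullet> (Q *v y) > 0" using Q spd_def by blast
  with \<open>Q *v y = x\<close> show "x \<bullet> (matrix_inv Q *v x) > 0" by (simp add: y_def inner_commute)
qed

lemma linear_le_quadratic_imp_zero:
  fixes \<beta> \<gamma> :: real
  assumes "\<And>\<tau>. \<tau> * \<beta> \<le> \<tau>\<^sup>2 * \<gamma>"
  shows "\<beta> = 0"
proof -
  define c where "c = \<bar>\<gamma>\<bar> + 1"
  have c: "c > 0" "\<gamma> < c" unfolding c_def by auto
  have "\<beta> / c * \<beta> \<le> (\<beta> / c)\<^sup>2 * \<gamma>" by (rule assms)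
  then have "\<beta>\<^sup>2 * c \<le> \<beta>\<^sup>2 * \<gamma>"
    using c by (simp add: power2_eq_square field_simps)
  then have "\<beta>\<^sup>2 * (c - \<gamma>) \<le> 0" by (simp add: algebra_simps)
  then have "\<beta>\<^sup>2 \<le> 0" using c by (simp add: mult_le_0_iff)
  then show ?thesis by simp
qed

definition orthonormal_eigenvectors :: "real^'n^'n \<Rightarrow> (real^'n) set \<Rightarrow> bool" where
  "orthonormal_eigenvectors M B \<longleftrightarrow>
     pairwise orthogonal B \<and> (\<forall>b\<in>B. norm b = 1 \<and> M *v b = (b \<bullet> (M *v b)) *\<^sub>R b)"

lemma quadratic_form_maximizer_in_subspace:
  fixes M :: "real^'n^'n"
  assumes S: "subspace S" and nontrivial: "S \<noteq> {0}"
  obtains v where "v \<in> S" "norm v = 1" "\<And>y. y \<in> S \<Longrightarrow> y \<bullet> (M *v y) \<le> (v \<bullet> (M *v v)) * (y \<bullet> y)"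
proof -
  let ?K = "S \<inter> sphere 0 1"
  have compact: "compact ?K" using closed_subspace[OF S] by (simp add: closed_Int_compact)
  have nonempty: "?K \<noteq> {}"
  proof -
    obtain x where "x \<in> S" "x \<noteq> 0" using nontrivial S subspace_0 by blast
    then have "x /\<^sub>R norm x \<in> ?K" using S subspace_scale by auto
    then show ?thesis by blast
  qed
  have cont: "continuous_on ?K (\<lambda>x. x \<bullet> (M *v x))"
    by (intro continuous_intros bounded_linear.continuous_on[OF matrix_vector_mul_bounded_linear])
  obtain v where vK: "v \<in> ?K" and vmax: "\<And>y. y \<in> ?K \<Longrightarrow> y \<bullet> (M *v y) \<le> v \<bullet> (M *v v)"
    using continuous_attains_sup[OF compact nonempty cont] by blast
  have "y \<bullet> (M *v y) \<le> (v \<bullet> (M *v v)) * (y \<bullet> y)" if "y \<in> S" for y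
  proof (cases "y = 0")
    case False
    then have "y /\<^sub>R norm y \<in> ?K" using that S subspace_scale by auto
    then have "(y /\<^sub>R norm y) \<bullet> (M *v (y /\<^sub>R norm y)) \<le> v \<bullet> (M *v v)" by (rule vmax)
    then show ?thesis
      using False by (simp add: matrix_vector_mult_scaleR dot_square_norm field_simps power2_eq_square)
  qed simp
  with vK that show ?thesis by auto
qed

lemma symmetric_matrix_eigenvector_in_invariant_subspace:
  fixes M :: "real^'n^'n"
  assumes sym: "transpose M = M" and S: "subspace S"
    and invariant: "\<And>x. x \<in> S \<Longrightarrow> M *v x \<in> S" and nontrivial: "S \<noteq> {0}"
  obtains v where "v \<in> S" "norm v = 1" "M *v v = (v \<bullet> (M *v v)) *\<^sub>R v"
proof -
  obtain v where vS: "v \<in> S" and "norm v = 1"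
    and rayleigh: "\<And>y. y \<in> S \<Longrightarrow> y \<bullet> (M *v y) \<le> (v \<bullet> (M *v v)) * (y \<bullet> y)"
    using quadratic_form_maximizer_in_subspace[OF S nontrivial] by blast
  define \<mu> where "\<mu> = v \<bullet> (M *v v)"
  have vv: "v \<bullet> v = 1" using \<open>norm v = 1\<close> by (simp add: norm_eq_1)
  \<comment> \<open>first-order optimality of the Rayleigh quotient at \<open>v\<close> in the directions orthogonal to \<open>v\<close>\<close>
  have orthogonal_image: "v \<bullet> (M *v y) = 0" if y: "y \<in> S" "v \<bullet> y = 0" for y
  proof -
    have "2 * (v \<bullet> (M *v y)) = 0"
    proof (rule linear_le_quadratic_imp_zero)
      fix \<tau> :: real
      have "v + \<tau> *\<^sub>R y \<in> S" using S y vS by (simp add: subspace_add subspace_scale)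
      from rayleigh[OF this, folded \<mu>_def]
      show "\<tau> * (2 * (v \<bullet> (M *v y))) \<le> \<tau>\<^sup>2 * (\<mu> * (y \<bullet> y) - y \<bullet> (M *v y))"
        using vv y(2) inner_symmetric_matrix_vector[OF sym, of y v]
        by (simp add: \<mu>_def matrix_vector_right_distrib matrix_vector_mult_scaleR inner_add_left
            inner_add_right inner_commute power2_eq_square algebra_simps)
    qed
    then show ?thesis by simp
  qed
  define r where "r = M *v v - \<mu> *\<^sub>R v"
  have "r \<in> S" unfolding r_def using invariant vS S by (simp add: subspace_diff subspace_scale)
  moreover have vr: "v \<bullet> r = 0" unfolding r_def \<mu>_def using vv by (simp add: inner_diff_right)
  ultimately have "(M *v v) \<bullet> r = 0"
    using orthogonal_image inner_symmetric_matrix_vector[OF sym] by metis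
  then have "r \<bullet> r = 0" using vr by (simp add: r_def inner_diff_left)
  then have "M *v v = \<mu> *\<^sub>R v" unfolding r_def by simp
  then show ?thesis using that vS \<open>norm v = 1\<close> \<mu>_def by auto
qed

lemma symmetric_matrix_orthonormal_eigenbasis_subspace:
  fixes M :: "real^'n^'n"
  assumes sym: "transpose M = M"
  shows "subspace S \<Longrightarrow> (\<And>x. x \<in> S \<Longrightarrow> M *v x \<in> S) \<Longrightarrow>
    \<exists>B. B \<subseteq> S \<and> span B = S \<and> orthonormal_eigenvectors M B"
proof (induction "dim S" arbitrary: S rule: less_induct)
  case less
  show ?case
  proof (cases "S = {0}")
    case True
    then show ?thesis by (intro exI[of _ "{}"]) (auto simp: orthonormal_eigenvectors_def)
  next
    case False
    obtain v where vS: "v \<in> S" and nv: "norm v = 1" and ev0: "M *v v = (v \<bullet> (M *v v)) *\<^sub>R v"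
      using symmetric_matrix_eigenvector_in_invariant_subspace[OF sym less.prems False] by blast
    define \<mu> where "\<mu> = v \<bullet> (M *v v)"
    have ev: "M *v v = \<mu> *\<^sub>R v" using ev0 unfolding \<mu>_def .
    have vv: "v \<bullet> v = 1" using nv by (simp add: norm_eq_1)
    define S' where "S' = {x \<in> S. v \<bullet> x = 0}"
    have S': "subspace S'" unfolding S'_def using less.prems(1)
      by (auto simp: subspace_def inner_add_right)
    have "M *v x \<in> S'" if "x \<in> S'" for x
    proof -
      have "v \<bullet> (M *v x) = (M *v v) \<bullet> x" using inner_symmetric_matrix_vector[OF sym] .
      also have "\<dots> = 0" using that unfolding ev S'_def by simp
      finally show ?thesis using less.prems(2) that unfolding S'_def by auto
    qed
    moreover have "dim S' < dim S"
    proof (rule dim_psubset)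
      have "v \<notin> S'" using vv unfolding S'_def by auto
      then have "S' \<subset> S" using vS unfolding S'_def by blast
      moreover have "span S' = S'" "span S = S" using S' less.prems(1) by (simp_all add: span_eq_iff)
      ultimately show "span S' \<subset> span S" by (simp del: span_eq_iff)
    qed
    ultimately obtain B' where B'S: "B' \<subseteq> S'" and spB': "span B' = S'"
      and B': "orthonormal_eigenvectors M B'"
      using less.hyps S' by blast
    have "span (insert v B') = S"
    proof
      show "span (insert v B') \<subseteq> S" using vS B'S less.prems(1) unfolding S'_def by (intro span_minimal) auto
      show "S \<subseteq> span (insert v B')"
      proof
        fix x assume "x \<in> S"
        then have "x - (v \<bullet> x) *\<^sub>R v \<in> span B'" unfolding spB' S'_def
          using vS less.prems(1) vv by (simp add: subspace_diff subspace_scale inner_diff_right)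
        then have "x - (v \<bullet> x) *\<^sub>R v \<in> span (insert v B')"
          using span_mono[of B' "insert v B'"] by blast
        moreover have "(v \<bullet> x) *\<^sub>R v \<in> span (insert v B')" by (simp add: span_base span_scale)
        ultimately have "(x - (v \<bullet> x) *\<^sub>R v) + (v \<bullet> x) *\<^sub>R v \<in> span (insert v B')"
          by (rule span_add)
        then show "x \<in> span (insert v B')" by simp
      qed
    qed
    moreover have "orthonormal_eigenvectors M (insert v B')"
      using B' B'S nv ev0 unfolding orthonormal_eigenvectors_def pairwise_insert S'_def orthogonal_def
      by (auto simp: inner_commute)
    ultimately show ?thesis using vS B'S unfolding S'_def by blast
  qed
qed

lemma symmetric_matrix_orthonormal_eigenbasis:
  fixes M :: "real^'n^'n"
  assumes "transpose M = M"
  obtains B where "span B = UNIV" "orthonormal_eigenvectors M B"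
  using symmetric_matrix_orthonormal_eigenbasis_subspace[OF assms, of UNIV] by auto

lemma inner_orthonormal:
  assumes "pairwise orthogonal B" "\<And>b. b \<in> B \<Longrightarrow> norm b = 1" "b \<in> B" "v \<in> B"
  shows "b \<bullet> v = (if v = b then 1 else 0)"
  using assms by (force simp: norm_eq_1 orthogonal_def pairwise_def)

lemma matrix_eq_on_spanning_set:
  fixes A C :: "real^'n^'m"
  assumes "span B = UNIV" and "\<And>b. b \<in> B \<Longrightarrow> A *v b = C *v b"
  shows "A = C"
proof -
  have "A *v x = C *v x" for x
    using linear_eq_on_span[OF matrix_vector_mul_linear matrix_vector_mul_linear assms(2)] assms(1)
    by blast
  then show ?thesis by (simp add: matrix_eq)
qed

lemma spsd_square_root_on_eigenvector:
  fixes R :: "real^'n^'n"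
  assumes R: "spsd R" and eigen: "R *v (R *v b) = \<mu> *\<^sub>R b" and "\<mu> \<ge> 0"
  shows "R *v b = sqrt \<mu> *\<^sub>R b"
proof -
  have sym: "transpose R = R" and psd: "\<And>x. x \<bullet> (R *v x) \<ge> 0" using R spsd_def by auto
  define z where "z = R *v b - sqrt \<mu> *\<^sub>R b"
  have "R *v z = - sqrt \<mu> *\<^sub>R z"
    using eigen \<open>\<mu> \<ge> 0\<close> unfolding z_def
    by (simp add: matrix_vector_mult_diff_distrib matrix_vector_mult_scaleR algebra_simps)
  then have "0 \<le> - sqrt \<mu> * (z \<bullet> z)" using psd[of z] by simp
  then have "sqrt \<mu> = 0 \<or> z \<bullet> z \<le> 0"
    using \<open>\<mu> \<ge> 0\<close> by (auto simp: mult_le_0_iff)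
  then have "sqrt \<mu> = 0 \<or> z = 0" using inner_ge_zero[of z] by auto
  then show ?thesis
  proof
    assume "sqrt \<mu> = 0"
    then have "(R *v b) \<bullet> (R *v b) = 0"
      using eigen inner_symmetric_matrix_vector[OF sym, of b "R *v b"] by simp
    then show ?thesis using \<open>sqrt \<mu> = 0\<close> by simp
  qed (simp add: z_def)
qed

lemma spsd_square_root_exists:
  fixes M :: "real^'n^'n"
  assumes "spsd M"
  obtains R where "spsd R" "R ** R = M"
proof -
  have sym: "transpose M = M" and psd: "\<And>x. x \<bullet> (M *v x) \<ge> 0" using assms spsd_def by auto
  obtain B where spanB: "span B = UNIV" and B: "orthonormal_eigenvectors M B"
    using symmetric_matrix_orthonormal_eigenbasis[OF sym] by blast
  define \<mu> where "\<mu> b = b \<bullet> (M *v b)" for b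
  have \<mu>: "\<mu> b \<ge> 0" for b using psd unfolding \<mu>_def .
  have orth: "pairwise orthogonal B" and unit: "\<And>b. b \<in> B \<Longrightarrow> norm b = 1"
    and M_eigen: "\<And>b. b \<in> B \<Longrightarrow> M *v b = \<mu> b *\<^sub>R b"
    using B unfolding orthonormal_eigenvectors_def \<mu>_def by auto
  define f where "f x = (\<Sum>b\<in>B. (sqrt (\<mu> b) * (x \<bullet> b)) *\<^sub>R b)" for x
  have "linear f"
    by (rule linearI) (simp_all add: f_def inner_add_left scaleR_add_left sum.distrib
        scaleR_sum_right distrib_left mult.left_commute)
  define R where "R = matrix f"
  have R: "R *v x = f x" for x
    unfolding R_def using matrix_vector_mul(2)[OF \<open>linear f\<close>] by metis
  have "R ** R = M"
  proof (rule matrix_eq_on_spanning_set[OF spanB])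
    fix b assume "b \<in> B"
    have "f b = (\<Sum>v\<in>B. (if v = b then sqrt (\<mu> v) *\<^sub>R v else 0))"
      unfolding f_def by (intro sum.cong) (auto simp: inner_orthonormal[OF orth unit \<open>b \<in> B\<close>])
    then have "R *v b = sqrt (\<mu> b) *\<^sub>R b"
      using pairwise_orthogonal_imp_finite[OF orth] \<open>b \<in> B\<close> by (simp add: R)
    then show "(R ** R) *v b = M *v b"
      using \<mu>[of b] M_eigen[OF \<open>b \<in> B\<close>]
      by (simp add: matrix_vector_mult_scaleR flip: matrix_vector_mul_assoc)
  qed
  moreover have R_inner: "x \<bullet> (R *v y) = (\<Sum>b\<in>B. sqrt (\<mu> b) * (y \<bullet> b) * (x \<bullet> b))" for x y
    unfolding R f_def by (simp add: inner_sum_right)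
  have "(transpose R *v x) \<bullet> z = (R *v x) \<bullet> z" for x z
  proof -
    have "(transpose R *v x) \<bullet> z = x \<bullet> (R *v z)" by (rule inner_matrix_vector_transpose[symmetric])
    also have "\<dots> = z \<bullet> (R *v x)" unfolding R_inner by (intro sum.cong refl) (simp add: ac_simps)
    finally show ?thesis by (simp add: inner_commute)
  qed
  then have "transpose R *v x = R *v x" for x using vector_eq_rdot by blast
  then have "transpose R = R" by (simp add: matrix_eq)
  moreover have "x \<bullet> (R *v x) \<ge> 0" for x
    unfolding R_inner using \<mu> by (intro sum_nonneg) (simp add: mult.assoc)
  ultimately show ?thesis using that unfolding spsd_def by blast
qed

lemma spsd_square_root_unique:
  fixes M R R' :: "real^'n^'n"
  assumes "spsd M" "spsd R" "R ** R = M" "spsd R'" "R' ** R' = M"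
  shows "R' = R"
proof -
  have "transpose M = M" using assms(1) spsd_def by auto
  then obtain B where spanB: "span B = UNIV" and B: "orthonormal_eigenvectors M B"
    using symmetric_matrix_orthonormal_eigenbasis by blast
  show ?thesis
  proof (rule matrix_eq_on_spanning_set[OF spanB])
    fix b assume "b \<in> B"
    define \<mu> where "\<mu> = b \<bullet> (M *v b)"
    have "M *v b = \<mu> *\<^sub>R b" "\<mu> \<ge> 0"
      using B \<open>b \<in> B\<close> assms(1) unfolding orthonormal_eigenvectors_def spsd_def \<mu>_def by auto
    then have "R *v (R *v b) = \<mu> *\<^sub>R b" "R' *v (R' *v b) = \<mu> *\<^sub>R b"
      using assms(3,5) by (simp_all add: matrix_vector_mul_assoc)
    then have "R *v b = sqrt \<mu> *\<^sub>R b" "R' *v b = sqrt \<mu> *\<^sub>R b"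
      using spsd_square_root_on_eigenvector[OF assms(2)] spsd_square_root_on_eigenvector[OF assms(4)]
        \<open>\<mu> \<ge> 0\<close> by blast+
    then show "R' *v b = R *v b" by simp
  qed
qed

lemma spsd_square_root_ex1: "spsd (M::real^'n^'n) \<Longrightarrow> \<exists>!R. spsd R \<and> R ** R = M"
  using spsd_square_root_exists spsd_square_root_unique by metis

lemma
  assumes "spsd (M::real^'n^'n)"
  shows spsd_msqrt: "spsd (msqrt M)" and msqrt_square: "msqrt M ** msqrt M = M"
  using theI'[OF spsd_square_root_ex1[OF assms]] unfolding msqrt_def by auto

lemma norm_msqrt_mult_vector:
  assumes "spsd (M::real^'n^'n)"
  shows "norm (msqrt M *v y) = sqrt (y \<bullet> (M *v y))"
proof -
  have "transpose (msqrt M) = msqrt M" using spsd_msqrt[OF assms] spsd_def by auto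
  then have "(msqrt M *v y) \<bullet> (msqrt M *v y) = y \<bullet> (M *v y)"
    by (simp add: inner_symmetric_matrix_vector matrix_vector_mul_assoc msqrt_square[OF assms] inner_commute)
  then show ?thesis by (simp add: norm_eq_sqrt_inner)
qed

lemma
  assumes "spd (Q::real^'n^'n)"
  shows symmetric_minvsqrt: "transpose (minvsqrt Q) = minvsqrt Q"
    and minvsqrt_square: "minvsqrt Q ** minvsqrt Q = matrix_inv Q"
proof -
  let ?R = "msqrt Q"
  have "spsd Q" using assms by (rule spd_imp_spsd)
  then have RR: "?R ** ?R = Q" and "transpose ?R = ?R"
    using spsd_msqrt msqrt_square spsd_def by auto
  have "invertible ?R"
  proof (rule invertible_if_kernel_trivial)
    fix x assume "?R *v x = 0"
    moreover have "Q *v x = ?R *v (?R *v x)" by (simp add: matrix_vector_mul_assoc RR)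
    ultimately have "Q *v x = 0" by simp
    then show "x = 0" using assms unfolding spd_def by fastforce
  qed
  then show "transpose (minvsqrt Q) = minvsqrt Q"
    unfolding minvsqrt_def using \<open>transpose ?R = ?R\<close> by (rule symmetric_matrix_inv)
  have "(minvsqrt Q ** minvsqrt Q) ** Q = (minvsqrt Q ** minvsqrt Q) ** (?R ** ?R)"
    by (simp only: RR)
  also have "\<dots> = minvsqrt Q ** ((minvsqrt Q ** ?R) ** ?R)"
    by (simp only: matrix_mul_assoc)
  also have "\<dots> = mat 1" unfolding minvsqrt_def by (simp add: matrix_inv_left[OF \<open>invertible ?R\<close>])
  finally show "minvsqrt Q ** minvsqrt Q = matrix_inv Q"
    by (rule matrix_inv_unique[OF spd_imp_invertible[OF assms], symmetric])
qed

lemma inner_congruence: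
  fixes C :: "real^'m^'n" and P :: "real^'m^'m"
  shows "y \<bullet> ((C ** P ** transpose C) *v y) = (transpose C *v y) \<bullet> (P *v (transpose C *v y))"
  by (simp add: inner_matrix_vector_transpose matrix_vector_mul_assoc[symmetric] del: transpose_matrix_vector)

lemma spsd_congruence:
  fixes C :: "real^'m^'n" and P :: "real^'m^'m"
  assumes "spsd P"
  shows "spsd (C ** P ** transpose C)"
proof -
  have "transpose P = P" using assms spsd_def by auto
  then have "transpose (C ** P ** transpose C) = C ** P ** transpose C"
    by (simp add: matrix_transpose_mul matrix_mul_assoc)
  moreover have "0 \<le> x \<bullet> ((C ** P ** transpose C) *v x)" for x
    using assms unfolding spsd_def inner_congruence by (simp del: transpose_matrix_vector)
  ultimately show ?thesis unfolding spsd_def by blast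
qed

section \<open>Matrix inverses depending on a parameter\<close>

lemma bounded_bilinear_matrix_matrix_mult:
  "bounded_bilinear ((**) :: real^'n^'m \<Rightarrow> real^'p^'n \<Rightarrow> real^'p^'m)"
proof -
  have "bilinear ((**) :: real^'n^'m \<Rightarrow> real^'p^'n \<Rightarrow> real^'p^'m)"
    unfolding bilinear_def
    by (auto intro!: linearI simp: matrix_add_ldistrib matrix_scalar_ac scalar_matrix_assoc
        matrix_matrix_mult_def vec_eq_iff sum.distrib algebra_simps sum_distrib_left)
  then show ?thesis by (rule bilinear_conv_bounded_bilinear[THEN iffD1])
qed

lemma bounded_bilinear_matrix_vector_mult:
  "bounded_bilinear ((*v) :: real^'n^'m \<Rightarrow> real^'n \<Rightarrow> real^'m)"
proof -
  have "bilinear ((*v) :: real^'n^'m \<Rightarrow> real^'n \<Rightarrow> real^'m)"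
    unfolding bilinear_def
    by (auto intro!: linearI simp: matrix_vector_mult_def vec_eq_iff sum.distrib algebra_simps
        sum_distrib_left)
  then show ?thesis by (rule bilinear_conv_bounded_bilinear[THEN iffD1])
qed

lemmas tendsto_matrix_mult[tendsto_intros] =
  bounded_bilinear.tendsto[OF bounded_bilinear_matrix_matrix_mult]
lemmas continuous_on_matrix_mult[continuous_intros] =
  bounded_bilinear.continuous_on[OF bounded_bilinear_matrix_matrix_mult]
lemmas continuous_on_matrix_vector_mult[continuous_intros] =
  bounded_bilinear.continuous_on[OF bounded_bilinear_matrix_vector_mult]

lemma continuous_on_transpose[continuous_intros]:
  "continuous_on S f \<Longrightarrow> continuous_on S (\<lambda>x. transpose (f x :: real^'n^'m))"
  unfolding transpose_def by (intro continuous_intros)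

lemma tendsto_det[tendsto_intros]:
  fixes f :: "'a \<Rightarrow> real^'n^'n"
  assumes "(f \<longlongrightarrow> A) F"
  shows "((\<lambda>x. det (f x)) \<longlongrightarrow> det A) F"
  unfolding det_def by (intro tendsto_intros assms)

lemma matrix_inv_Cramer:
  fixes A :: "real^'n^'n"
  assumes "invertible A"
  shows "matrix_inv A = (\<chi> k j. det (\<chi> i l. if l = k then axis j 1 $ i else A $ i $ l) / det A)"
proof -
  have "det A \<noteq> 0" using assms invertible_det_nz by blast
  have "column j (matrix_inv A) = (\<chi> k. det (\<chi> i l. if l = k then axis j 1 $ i else A $ i $ l) / det A)" for j
  proof -
    have "A *v (matrix_inv A *v axis j 1) = axis j 1" by (rule matrix_inv_vector_cancel_right[OF assms])
    then show ?thesis by (simp add: cramer[OF \<open>det A \<noteq> 0\<close>] flip: matrix_vector_mult_basis)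
  qed
  then show ?thesis by (simp add: vec_eq_iff column_def)
qed

lemma tendsto_matrix_inv:
  fixes f :: "'a \<Rightarrow> real^'n^'n"
  assumes "(f \<longlongrightarrow> A) F" "invertible A" "\<forall>\<^sub>F x in F. invertible (f x)"
  shows "((\<lambda>x. matrix_inv (f x)) \<longlongrightarrow> matrix_inv A) F"
proof -
  have "((\<lambda>x. \<chi> k j. det (\<chi> i l. if l = k then axis j 1 $ i else f x $ i $ l) / det (f x))
      \<longlongrightarrow> matrix_inv A) F"
    unfolding matrix_inv_Cramer[OF assms(2)] using assms(1,2) invertible_det_nz
    by (auto intro!: tendsto_intros)
  then show ?thesis
    by (rule Lim_transform_eventually) (use assms(3) in \<open>auto elim!: eventually_mono simp: matrix_inv_Cramer\<close>)
qed

lemma matrix_inv_diff: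
  fixes A B :: "real^'n^'n"
  assumes "invertible A" "invertible B"
  shows "matrix_inv B - matrix_inv A = - (matrix_inv B ** (B - A) ** matrix_inv A)"
  using assms
  by (simp add: bounded_bilinear.diff_left[OF bounded_bilinear_matrix_matrix_mult]
      bounded_bilinear.diff_right[OF bounded_bilinear_matrix_matrix_mult]
      matrix_inv_left matrix_inv_right flip: matrix_mul_assoc)

lemma matrix_inv_difference_quotient:
  fixes A B Q' :: "real^'n^'n"
  assumes "invertible A" "invertible B"
  shows "(matrix_inv B - matrix_inv A - h *\<^sub>R - (matrix_inv A ** Q' ** matrix_inv A)) /\<^sub>R n
    = - (matrix_inv B ** ((B - A - h *\<^sub>R Q') /\<^sub>R n) ** matrix_inv A)
      - (h / n) *\<^sub>R ((matrix_inv B - matrix_inv A) ** Q' ** matrix_inv A)"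
proof -
  have "(matrix_inv B - matrix_inv A - h *\<^sub>R - (matrix_inv A ** Q' ** matrix_inv A)) /\<^sub>R n
      = (- (matrix_inv B ** (B - A) ** matrix_inv A) + h *\<^sub>R (matrix_inv A ** Q' ** matrix_inv A)) /\<^sub>R n"
    by (simp add: matrix_inv_diff[OF assms])
  also have "\<dots> = - (matrix_inv B ** ((B - A - h *\<^sub>R Q') /\<^sub>R n) ** matrix_inv A)
      - (h / n) *\<^sub>R ((matrix_inv B - matrix_inv A) ** Q' ** matrix_inv A)"
    by (simp add: bounded_bilinear.add_left[OF bounded_bilinear_matrix_matrix_mult]
        bounded_bilinear.add_right[OF bounded_bilinear_matrix_matrix_mult]
        bounded_bilinear.diff_left[OF bounded_bilinear_matrix_matrix_mult]
        bounded_bilinear.diff_right[OF bounded_bilinear_matrix_matrix_mult]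
        bounded_bilinear.scaleR_left[OF bounded_bilinear_matrix_matrix_mult]
        bounded_bilinear.scaleR_right[OF bounded_bilinear_matrix_matrix_mult]
        divide_inverse algebra_simps)
  finally show ?thesis .
qed

lemma has_vector_derivative_matrix_inv:
  fixes Q :: "real \<Rightarrow> real^'n^'n"
  assumes Q': "(Q has_vector_derivative Q') (at x within S)"
    and inv: "\<And>y. y \<in> S \<Longrightarrow> invertible (Q y)" and "x \<in> S"
  shows "((\<lambda>y. matrix_inv (Q y)) has_vector_derivative
           - (matrix_inv (Q x) ** Q' ** matrix_inv (Q x))) (at x within S)"
proof -
  let ?M = "\<lambda>y. matrix_inv (Q y)"
  have in_S: "\<forall>\<^sub>F y in at x within S. y \<in> S" by (simp add: eventually_at_filter)
  have M_cont: "(?M \<longlongrightarrow> ?M x) (at x within S)"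
    using has_vector_derivative_continuous[OF Q'] inv \<open>x \<in> S\<close> in_S
    by (intro tendsto_matrix_inv) (auto simp: continuous_within elim!: eventually_mono)
  define E where "E y = (Q y - Q x - (y - x) *\<^sub>R Q') /\<^sub>R norm (y - x)" for y
  have "(E \<longlongrightarrow> 0) (at x within S)"
    using Q' unfolding has_vector_derivative_def has_derivative_at_within E_def by simp
  then have lim_E: "((\<lambda>y. ?M y ** E y ** ?M x) \<longlongrightarrow> 0) (at x within S)"
    using tendsto_matrix_mult[OF tendsto_matrix_mult[OF M_cont] tendsto_const] by fastforce
  have lim_M: "((\<lambda>y. ((y - x) / norm (y - x)) *\<^sub>R ((?M y - ?M x) ** Q' ** ?M x)) \<longlongrightarrow> 0)
      (at x within S)"
  proof (rule Lim_null_comparison)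
    show "((\<lambda>y. norm ((?M y - ?M x) ** Q' ** ?M x)) \<longlongrightarrow> 0) (at x within S)"
      using M_cont by (intro tendsto_norm_zero) (auto intro!: tendsto_eq_intros)
    show "\<forall>\<^sub>F y in at x within S. norm (((y - x) / norm (y - x)) *\<^sub>R ((?M y - ?M x) ** Q' ** ?M x))
        \<le> norm ((?M y - ?M x) ** Q' ** ?M x)"
      by (intro always_eventually allI) (simp add: mult_left_le_one_le)
  qed
  have quotient: "(?M y - ?M x - (y - x) *\<^sub>R - (?M x ** Q' ** ?M x)) /\<^sub>R norm (y - x)
      = - (?M y ** E y ** ?M x) - ((y - x) / norm (y - x)) *\<^sub>R ((?M y - ?M x) ** Q' ** ?M x)"
    if "y \<in> S" for y
    unfolding E_def by (rule matrix_inv_difference_quotient[OF inv[OF \<open>x \<in> S\<close>] inv[OF that]])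
  have "((\<lambda>y. - (?M y ** E y ** ?M x) - ((y - x) / norm (y - x)) *\<^sub>R ((?M y - ?M x) ** Q' ** ?M x))
      \<longlongrightarrow> 0) (at x within S)"
    using tendsto_diff[OF tendsto_minus[OF lim_E] lim_M] by simp
  then have "((\<lambda>y. (?M y - ?M x - (y - x) *\<^sub>R - (?M x ** Q' ** ?M x)) /\<^sub>R norm (y - x))
      \<longlongrightarrow> 0) (at x within S)"
    using eventually_mono[OF in_S quotient[symmetric]] by (rule Lim_transform_eventually)
  then show ?thesis
    unfolding has_vector_derivative_def has_derivative_at_within
    by (intro conjI bounded_linear_scaleR_left)
qed

section \<open>Absolutely continuous functions\<close>

definition nonoverlapping_intervals :: "real \<Rightarrow> real \<Rightarrow> nat \<Rightarrow> (nat \<Rightarrow> real) \<Rightarrow> (nat \<Rightarrow> real) \<Rightarrow> bool"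
  where "nonoverlapping_intervals a b N l r \<longleftrightarrow>
    (\<forall>k<N. a \<le> l k \<and> l k \<le> r k \<and> r k \<le> b) \<and> (\<forall>k<N. \<forall>j<N. k \<noteq> j \<longrightarrow> r k \<le> l j \<or> r j \<le> l k)"

lemma abs_continuous_on_iff:
  "abs_continuous_on a b f \<longleftrightarrow>
    (\<forall>e>0. \<exists>d>0. \<forall>N l r. nonoverlapping_intervals a b N l r \<and> (\<Sum>k<N. r k - l k) < d \<longrightarrow>
       (\<Sum>k<N. norm (f (r k) - f (l k))) < e)"
  unfolding abs_continuous_on_def nonoverlapping_intervals_def by (simp only: conj_assoc)

lemma abs_continuous_onE:
  assumes "abs_continuous_on a b f" "e > 0"
  obtains d where "d > 0" and "\<And>N l r. nonoverlapping_intervals a b N l r \<Longrightarrow> (\<Sum>k<N. r k - l k) < d \<Longrightarrow>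
    (\<Sum>k<N. norm (f (r k) - f (l k))) < e"
proof -
  obtain d where "d > 0" and small: "\<forall>N l r. nonoverlapping_intervals a b N l r \<and> (\<Sum>k<N. r k - l k) < d \<longrightarrow>
      (\<Sum>k<N. norm (f (r k) - f (l k))) < e"
    using assms(1)[unfolded abs_continuous_on_iff, rule_format, OF assms(2)] by blast
  show thesis by (rule that[OF \<open>d > 0\<close>]) (use small in blast)
qed

lemma abs_continuous_onI:
  assumes "\<And>e. e > 0 \<Longrightarrow> \<exists>d>0. \<forall>N l r. nonoverlapping_intervals a b N l r \<longrightarrow>
    (\<Sum>k<N. r k - l k) < d \<longrightarrow> (\<Sum>k<N. norm (f (r k) - f (l k))) < e"
  shows "abs_continuous_on a b f"
  unfolding abs_continuous_on_iff
proof (intro allI impI)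
  fix e :: real assume "e > 0"
  then obtain d where "d > 0" and "\<forall>N l r. nonoverlapping_intervals a b N l r \<longrightarrow>
      (\<Sum>k<N. r k - l k) < d \<longrightarrow> (\<Sum>k<N. norm (f (r k) - f (l k))) < e"
    using assms by blast
  then show "\<exists>d>0. \<forall>N l r. nonoverlapping_intervals a b N l r \<and> (\<Sum>k<N. r k - l k) < d \<longrightarrow>
      (\<Sum>k<N. norm (f (r k) - f (l k))) < e"
    by (intro exI[of _ d]) simp
qed

lemma abs_continuous_on_subinterval:
  assumes "abs_continuous_on a b f" "a \<le> c" "d \<le> b"
  shows "abs_continuous_on c d f"
proof (rule abs_continuous_onI)
  fix e :: real assume "e > 0"
  with assms(1) obtain \<delta> where "\<delta> > 0" and small: "\<And>N l r. nonoverlapping_intervals a b N l r \<Longrightarrow>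
      (\<Sum>k<N. r k - l k) < \<delta> \<Longrightarrow> (\<Sum>k<N. norm (f (r k) - f (l k))) < e"
    by (rule abs_continuous_onE) blast
  have "nonoverlapping_intervals a b N l r" if "nonoverlapping_intervals c d N l r" for N l r
    using that assms(2,3) unfolding nonoverlapping_intervals_def by force
  then show "\<exists>\<delta>>0. \<forall>N l r. nonoverlapping_intervals c d N l r \<longrightarrow>
      (\<Sum>k<N. r k - l k) < \<delta> \<longrightarrow> (\<Sum>k<N. norm (f (r k) - f (l k))) < e"
    using \<open>\<delta> > 0\<close> small by (intro exI[of _ \<delta>]) auto
qed

lemma abs_continuous_on_imp_continuous_on:
  assumes "abs_continuous_on a b f"
  shows "continuous_on {a..b} f"
  unfolding continuous_on_iff
proof (intro ballI allI impI)
  fix x e assume x: "x \<in> {a..b}" and "(e::real) > 0"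
  from assms \<open>e > 0\<close> obtain d where "d > 0" and small: "\<And>N l r. nonoverlapping_intervals a b N l r \<Longrightarrow>
      (\<Sum>k<N. r k - l k) < d \<Longrightarrow> (\<Sum>k<N. norm (f (r k) - f (l k))) < e"
    by (rule abs_continuous_onE) blast
  have "dist (f y) (f x) < e" if "y \<in> {a..b}" "dist y x < d" for y
    using small[of 1 "\<lambda>_. min x y" "\<lambda>_. max x y"] x that
    by (cases "x \<le> y") (auto simp: nonoverlapping_intervals_def dist_norm norm_minus_commute dist_real_def)
  then show "\<exists>d>0. \<forall>y\<in>{a..b}. dist y x < d \<longrightarrow> dist (f y) (f x) < e" using \<open>d > 0\<close> by blast
qed

lemma lipschitz_on_imp_abs_continuous_on:
  assumes "L-lipschitz_on {a..b} f"
  shows "abs_continuous_on a b f"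
proof (rule abs_continuous_onI)
  fix e :: real assume "e > 0"
  have "L \<ge> 0" using assms by (rule lipschitz_on_nonneg)
  have "(\<Sum>k<N. norm (f (r k) - f (l k))) < e"
    if "nonoverlapping_intervals a b N l r" "(\<Sum>k<N. r k - l k) < e / (L + 1)" for N l r
  proof -
    have "(\<Sum>k<N. norm (f (r k) - f (l k))) \<le> (\<Sum>k<N. (L + 1) * (r k - l k))"
    proof (rule sum_mono)
      fix k assume "k \<in> {..<N}"
      then have k: "a \<le> l k" "l k \<le> r k" "r k \<le> b" using that(1) by (auto simp: nonoverlapping_intervals_def)
      then have "norm (f (r k) - f (l k)) \<le> L * (r k - l k)"
        using lipschitz_onD[OF assms, of "r k" "l k"] by (simp add: dist_norm dist_real_def)
      also have "\<dots> \<le> (L + 1) * (r k - l k)" using k by (simp add: mult_right_mono)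
      finally show "norm (f (r k) - f (l k)) \<le> (L + 1) * (r k - l k)" .
    qed
    also have "\<dots> = (L + 1) * (\<Sum>k<N. r k - l k)" by (simp add: sum_distrib_left)
    also have "\<dots> < (L + 1) * (e / (L + 1))"
      using that(2) \<open>L \<ge> 0\<close> by (intro mult_strict_left_mono) auto
    finally show ?thesis using \<open>L \<ge> 0\<close> by simp
  qed
  moreover have "e / (L + 1) > 0" using \<open>e > 0\<close> \<open>L \<ge> 0\<close> by simp
  ultimately show "\<exists>d>0. \<forall>N l r. nonoverlapping_intervals a b N l r \<longrightarrow> (\<Sum>k<N. r k - l k) < d \<longrightarrow>
      (\<Sum>k<N. norm (f (r k) - f (l k))) < e" by blast
qed

lemma abs_continuous_on_add:
  assumes f: "abs_continuous_on a b f" and g: "abs_continuous_on a b g"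
  shows "abs_continuous_on a b (\<lambda>s. f s + g s)"
proof (rule abs_continuous_onI)
  fix e :: real assume "e > 0"
  then have "e / 2 > 0" by simp
  obtain df where "df > 0" and df: "\<And>N l r. nonoverlapping_intervals a b N l r \<Longrightarrow>
      (\<Sum>k<N. r k - l k) < df \<Longrightarrow> (\<Sum>k<N. norm (f (r k) - f (l k))) < e / 2"
    using f \<open>e / 2 > 0\<close> by (rule abs_continuous_onE) blast
  obtain dg where "dg > 0" and dg: "\<And>N l r. nonoverlapping_intervals a b N l r \<Longrightarrow>
      (\<Sum>k<N. r k - l k) < dg \<Longrightarrow> (\<Sum>k<N. norm (g (r k) - g (l k))) < e / 2"
    using g \<open>e / 2 > 0\<close> by (rule abs_continuous_onE) blast
  have "(\<Sum>k<N. norm (f (r k) + g (r k) - (f (l k) + g (l k)))) < e"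
    if "nonoverlapping_intervals a b N l r" "(\<Sum>k<N. r k - l k) < min df dg" for N l r
  proof -
    have "(\<Sum>k<N. norm (f (r k) + g (r k) - (f (l k) + g (l k))))
        \<le> (\<Sum>k<N. norm (f (r k) - f (l k))) + (\<Sum>k<N. norm (g (r k) - g (l k)))"
      unfolding sum.distrib[symmetric] by (intro sum_mono) (simp add: add_diff_add norm_triangle_ineq)
    also have "\<dots> < e / 2 + e / 2" using df[OF that(1)] dg[OF that(1)] that(2) by (intro add_strict_mono) auto
    finally show ?thesis by simp
  qed
  then show "\<exists>d>0. \<forall>N l r. nonoverlapping_intervals a b N l r \<longrightarrow> (\<Sum>k<N. r k - l k) < d \<longrightarrow>
      (\<Sum>k<N. norm (f (r k) + g (r k) - (f (l k) + g (l k)))) < e"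
    using \<open>df > 0\<close> \<open>dg > 0\<close> by (intro exI[of _ "min df dg"]) auto
qed

lemma abs_continuous_on_minus:
  "abs_continuous_on a b f \<Longrightarrow> abs_continuous_on a b (\<lambda>s. - f s)"
  unfolding abs_continuous_on_def by (simp add: norm_minus_commute)

lemma abs_continuous_on_diff:
  "abs_continuous_on a b f \<Longrightarrow> abs_continuous_on a b g \<Longrightarrow> abs_continuous_on a b (\<lambda>s. f s - g s)"
  using abs_continuous_on_add[of a b f "\<lambda>s. - g s"] abs_continuous_on_minus by fastforce

lemma abs_continuous_on_bilinear:
  assumes bb: "bounded_bilinear pr"
    and f: "abs_continuous_on a b f" and g: "abs_continuous_on a b g"
  shows "abs_continuous_on a b (\<lambda>s. pr (f s) (g s))"
proof (rule abs_continuous_onI)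
  fix e :: real assume "e > 0"
  obtain K where "K > 0" and K: "\<And>x y. norm (pr x y) \<le> norm x * norm y * K"
    using bounded_bilinear.pos_bounded[OF bb] by blast
  obtain Bf where "Bf \<ge> 0" and Bf: "\<And>s. s \<in> {a..b} \<Longrightarrow> norm (f s) \<le> Bf"
    using continuous_on_compact_bound[OF compact_Icc abs_continuous_on_imp_continuous_on[OF f]] by blast
  obtain Bg where "Bg \<ge> 0" and Bg: "\<And>s. s \<in> {a..b} \<Longrightarrow> norm (g s) \<le> Bg"
    using continuous_on_compact_bound[OF compact_Icc abs_continuous_on_imp_continuous_on[OF g]] by blast
  define C where "C = K * (Bf + Bg) + 1"
  have KB: "K * Bf \<ge> 0" "K * Bg \<ge> 0" using \<open>K > 0\<close> \<open>Bf \<ge> 0\<close> \<open>Bg \<ge> 0\<close> by simp_all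
  then have "C > 0" and CB: "Bf * K \<le> C" "Bg * K \<le> C" unfolding C_def by (simp_all add: algebra_simps)
  have step: "norm (pr (f s) (g s) - pr (f t) (g t)) \<le> C * (norm (f s - f t) + norm (g s - g t))"
    if "s \<in> {a..b}" "t \<in> {a..b}" for s t
  proof -
    have "pr (f s) (g s) - pr (f t) (g t) = pr (f s - f t) (g s) + pr (f t) (g s - g t)"
      by (simp add: bounded_bilinear.diff_left[OF bb] bounded_bilinear.diff_right[OF bb])
    then have "norm (pr (f s) (g s) - pr (f t) (g t)) \<le> norm (pr (f s - f t) (g s)) + norm (pr (f t) (g s - g t))"
      by (simp add: norm_triangle_ineq)
    also have "\<dots> \<le> norm (f s - f t) * (norm (g s) * K) + norm (g s - g t) * (norm (f t) * K)"
      using K[of "f s - f t" "g s"] K[of "f t" "g s - g t"] by (simp add: mult.assoc mult.commute[of "norm (f t)"])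
    also have "\<dots> \<le> norm (f s - f t) * C + norm (g s - g t) * C"
    proof -
      have "norm (g s) * K \<le> Bg * K" "norm (f t) * K \<le> Bf * K"
        using Bf[OF that(2)] Bg[OF that(1)] \<open>K > 0\<close> by simp_all
      then have "norm (g s) * K \<le> C" "norm (f t) * K \<le> C" using CB by linarith+
      then show ?thesis by (intro add_mono mult_left_mono) auto
    qed
    finally show ?thesis by (simp add: algebra_simps)
  qed
  have "e / (2 * C) > 0" using \<open>e > 0\<close> \<open>C > 0\<close> by simp
  obtain df where "df > 0" and df: "\<And>N l r. nonoverlapping_intervals a b N l r \<Longrightarrow>
      (\<Sum>k<N. r k - l k) < df \<Longrightarrow> (\<Sum>k<N. norm (f (r k) - f (l k))) < e / (2 * C)"
    using f \<open>e / (2 * C) > 0\<close> by (rule abs_continuous_onE) blast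
  obtain dg where "dg > 0" and dg: "\<And>N l r. nonoverlapping_intervals a b N l r \<Longrightarrow>
      (\<Sum>k<N. r k - l k) < dg \<Longrightarrow> (\<Sum>k<N. norm (g (r k) - g (l k))) < e / (2 * C)"
    using g \<open>e / (2 * C) > 0\<close> by (rule abs_continuous_onE) blast
  have "(\<Sum>k<N. norm (pr (f (r k)) (g (r k)) - pr (f (l k)) (g (l k)))) < e"
    if I: "nonoverlapping_intervals a b N l r" "(\<Sum>k<N. r k - l k) < min df dg" for N l r
  proof -
    have "(\<Sum>k<N. norm (pr (f (r k)) (g (r k)) - pr (f (l k)) (g (l k))))
        \<le> C * ((\<Sum>k<N. norm (f (r k) - f (l k))) + (\<Sum>k<N. norm (g (r k) - g (l k))))"
      unfolding sum.distrib[symmetric] sum_distrib_left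
      using I(1) by (intro sum_mono step) (auto simp: nonoverlapping_intervals_def)
    also have "\<dots> < C * (e / (2 * C) + e / (2 * C))"
      using df[OF I(1)] dg[OF I(1)] I(2) \<open>C > 0\<close> by (intro mult_strict_left_mono add_strict_mono) auto
    also have "\<dots> = e" using \<open>C > 0\<close> by (simp add: field_simps)
    finally show ?thesis .
  qed
  then show "\<exists>d>0. \<forall>N l r. nonoverlapping_intervals a b N l r \<longrightarrow> (\<Sum>k<N. r k - l k) < d \<longrightarrow>
      (\<Sum>k<N. norm (pr (f (r k)) (g (r k)) - pr (f (l k)) (g (l k)))) < e"
    using \<open>df > 0\<close> \<open>dg > 0\<close> by (intro exI[of _ "min df dg"]) auto
qed

lemma abs_continuous_on_if_continuous_derivative:
  fixes f :: "real \<Rightarrow> 'a::real_normed_vector"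
  assumes f': "\<And>s. s \<in> {a..b} \<Longrightarrow> (f has_vector_derivative f' s) (at s within {a..b})"
    and "continuous_on {a..b} f'"
  shows "abs_continuous_on a b f"
proof -
  obtain L where "L \<ge> 0" and L: "\<And>s. s \<in> {a..b} \<Longrightarrow> norm (f' s) \<le> L"
    using continuous_on_compact_bound[OF compact_Icc \<open>continuous_on {a..b} f'\<close>] by blast
  have "L-lipschitz_on {a..b} f"
  proof (rule bounded_derivative_imp_lipschitz[OF _ convex_real_interval(5) _ \<open>L \<ge> 0\<close>])
    show "(f has_derivative (\<lambda>h. h *\<^sub>R f' s)) (at s within {a..b})" if "s \<in> {a..b}" for s
      using f'[OF that] unfolding has_vector_derivative_def .
    show "onorm (\<lambda>h. h *\<^sub>R f' s) \<le> L" if "s \<in> {a..b}" for s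
      using L[OF that] onorm_scaleR_left[OF bounded_linear_ident, of "f' s"] onorm_id[where 'a=real] by simp
  qed
  then show ?thesis by (rule lipschitz_on_imp_abs_continuous_on)
qed

lemma interior_disjoint_intervals_ordered:
  fixes c d c' d' :: real
  assumes "c < d" "c' < d'" "interior {c..d} \<inter> interior {c'..d'} = {}"
  shows "d \<le> c' \<or> d' \<le> c"
proof (rule ccontr)
  assume "\<not> (d \<le> c' \<or> d' \<le> c)"
  then have "(max c c' + min d d') / 2 \<in> interior {c..d} \<inter> interior {c'..d'}"
    using assms(1,2) by auto
  with assms(3) show False by blast
qed

lemma measure_Union_interior_disjoint_intervals:
  assumes "finite F" and Icc: "\<And>K. K \<in> F \<Longrightarrow> lo K < hi K \<and> {lo K..hi K} = K"
    and disjoint: "pairwise (\<lambda>K K'. interior K \<inter> interior K' = {}) F"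
  shows "measure lebesgue (\<Union>F) = (\<Sum>K\<in>F. hi K - lo K)"
proof -
  have "measure lebesgue (\<Union>F) = (\<Sum>K\<in>F. measure lebesgue K)"
  proof (rule measure_negligible_finite_Union[OF \<open>finite F\<close>])
    show "K \<in> lmeasurable" if "K \<in> F" for K
      using lmeasurable_interval(1)[of "lo K" "hi K"] Icc[OF that] by simp
    show "pairwise (\<lambda>S T. negligible (S \<inter> T)) F"
    proof (intro pairwiseI)
      fix S T assume "S \<in> F" "T \<in> F" "S \<noteq> T"
      then have "hi S \<le> lo T \<or> hi T \<le> lo S"
        using interior_disjoint_intervals_ordered[of "lo S" "hi S" "lo T" "hi T"] Icc disjoint
        unfolding pairwise_def by metis
      then have "{lo S..hi S} \<inter> {lo T..hi T} \<subseteq> {hi S, hi T}" by auto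
      then show "negligible (S \<inter> T)"
        using Icc[OF \<open>S \<in> F\<close>] Icc[OF \<open>T \<in> F\<close>] negligible_subset[of "{hi S, hi T}"] by auto
    qed
  qed
  also have "\<dots> = (\<Sum>K\<in>F. hi K - lo K)"
  proof (rule sum.cong[OF refl])
    fix K assume "K \<in> F"
    from Icc[OF this] have "lo K \<le> hi K" by simp
    then have "measure lebesgue {lo K..hi K} = hi K - lo K" by simp
    then show "measure lebesgue K = hi K - lo K" by (simp only: Icc[OF \<open>K \<in> F\<close>])
  qed
  finally show ?thesis .
qed

lemma sum_abs_continuous_on_interval_family:
  fixes g :: "real \<Rightarrow> 'a::real_normed_vector"
  assumes small: "\<And>N l r. nonoverlapping_intervals a b N l r \<Longrightarrow> (\<Sum>k<N. r k - l k) < \<delta> \<Longrightarrow>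
      (\<Sum>k<N. norm (g (r k) - g (l k))) < e"
    and "finite F" and intervals: "\<And>K. K \<in> F \<Longrightarrow> \<exists>c d. a \<le> c \<and> c < d \<and> d \<le> b \<and> K = {c..d}"
    and disjoint: "pairwise (\<lambda>K K'. interior K \<inter> interior K' = {}) F"
    and points: "\<And>K. K \<in> F \<Longrightarrow> s K \<in> K \<and> t K \<in> K"
    and "measure lebesgue (\<Union>F) < \<delta>"
  shows "(\<Sum>K\<in>F. norm (g (t K) - g (s K))) < e"
proof -
  obtain lo hi where bounds: "\<And>K. K \<in> F \<Longrightarrow> a \<le> lo K \<and> lo K < hi K \<and> hi K \<le> b"
    and Icc: "\<And>K. K \<in> F \<Longrightarrow> {lo K..hi K} = K"
    using intervals by metis
  obtain h where h: "bij_betw h {..<card F} F"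
    using ex_bij_betw_nat_finite[OF \<open>finite F\<close>] by (auto simp: atLeast0LessThan)
  then have hF: "h k \<in> F" if "k < card F" for k using that by (auto simp: bij_betw_def)
  define l where "l k = min (s (h k)) (t (h k))" for k
  define r where "r k = max (s (h k)) (t (h k))" for k
  have lr: "lo (h k) \<le> l k" "l k \<le> r k" "r k \<le> hi (h k)" if "k < card F" for k
    using points[OF hF[OF that]] Icc[OF hF[OF that]] unfolding l_def r_def by auto
  have "nonoverlapping_intervals a b (card F) l r"
    unfolding nonoverlapping_intervals_def
  proof (intro conjI allI impI)
    fix k assume k: "k < card F"
    show "a \<le> l k" "l k \<le> r k" "r k \<le> b" using lr[OF k] bounds[OF hF[OF k]] by auto
  next
    fix k j assume k: "k < card F" and j: "j < card F" and "k \<noteq> j"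
    then have "h k \<noteq> h j" using h unfolding bij_betw_def inj_on_def by auto
    then have "hi (h k) \<le> lo (h j) \<or> hi (h j) \<le> lo (h k)"
      using interior_disjoint_intervals_ordered bounds Icc disjoint hF[OF k] hF[OF j]
      unfolding pairwise_def by metis
    then show "r k \<le> l j \<or> r j \<le> l k" using lr[OF k] lr[OF j] by linarith
  qed
  moreover have "(\<Sum>k<card F. r k - l k) < \<delta>"
  proof -
    have "(\<Sum>k<card F. r k - l k) \<le> (\<Sum>k<card F. hi (h k) - lo (h k))"
      using lr by (intro sum_mono) fastforce
    also have "\<dots> = (\<Sum>K\<in>F. hi K - lo K)"
      using sum.reindex_bij_betw[OF h, of "\<lambda>K. hi K - lo K"] by simp
    also have "\<dots> = measure lebesgue (\<Union>F)"
      using measure_Union_interior_disjoint_intervals[OF \<open>finite F\<close> _ disjoint, of lo hi] bounds Icc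
      by simp
    also have "\<dots> < \<delta>" by fact
    finally show ?thesis .
  qed
  ultimately have "(\<Sum>k<card F. norm (g (r k) - g (l k))) < e" by (rule small)
  moreover have "norm (g (r k) - g (l k)) = norm (g (t (h k)) - g (s (h k)))" for k
    unfolding l_def r_def by (cases "s (h k) \<le> t (h k)") (auto simp: norm_minus_commute)
  ultimately show ?thesis using sum.reindex_bij_betw[OF h, of "\<lambda>K. norm (g (t K) - g (s K))"] by simp
qed

lemma negligible_abs_continuous_image:
  fixes g :: "real \<Rightarrow> real"
  assumes ac: "abs_continuous_on a b g" and "negligible N" and "N \<subseteq> {a..b}"
  shows "negligible (g ` N)"
proof (cases "a < b")
  case False
  with \<open>N \<subseteq> {a..b}\<close> have "N \<subseteq> {a}" by fastforce
  then have "g ` N \<subseteq> {g a}" by blast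
  then show ?thesis by (rule negligible_subset[rotated]) simp
next
  case True
  show ?thesis unfolding negligible_outer_le
  proof (intro allI impI)
    fix e :: real assume "e > 0"
    with ac obtain \<delta> where "\<delta> > 0" and small: "\<And>M l r. nonoverlapping_intervals a b M l r \<Longrightarrow>
        (\<Sum>k<M. r k - l k) < \<delta> \<Longrightarrow> (\<Sum>k<M. norm (g (r k) - g (l k))) < e"
      by (rule abs_continuous_onE) blast
    have "N \<in> lmeasurable" "N \<subseteq> cbox a b" "\<delta> / 2 > 0"
      using \<open>negligible N\<close> \<open>N \<subseteq> {a..b}\<close> \<open>\<delta> > 0\<close> by (auto intro: negligible_imp_measurable)
    then obtain \<D> where "countable \<D>"
      and \<D>: "\<And>K. K \<in> \<D> \<Longrightarrow> K \<subseteq> cbox a b \<and> K \<noteq> {} \<and> (\<exists>c d. K = cbox c d)"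
      and disjoint: "pairwise (\<lambda>A B. interior A \<inter> interior B = {}) \<D>"
      and nondegenerate: "\<And>K. K \<in> \<D> \<Longrightarrow> box a b \<noteq> {} \<Longrightarrow> interior K \<noteq> {}"
      and cover: "N \<subseteq> \<Union>\<D>" and "\<Union>\<D> \<in> lmeasurable"
      and "measure lebesgue (\<Union>\<D>) \<le> measure lebesgue N + \<delta> / 2"
      by (rule measurable_outer_intervals_bounded) blast
    then have measure_\<D>: "measure lebesgue (\<Union>\<D>) < \<delta>"
      using \<open>negligible N\<close> \<open>\<delta> > 0\<close> by (simp add: negligible_imp_measure0)
    have intervals: "\<exists>c d. a \<le> c \<and> c < d \<and> d \<le> b \<and> K = {c..d}" if K: "K \<in> \<D>" for K
    proof -
      obtain c d where Kcd: "K = {c..d}" and "{c..d} \<subseteq> {a..b}" using \<D>[OF K] by auto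
      have "c < d" using nondegenerate[OF K] True unfolding Kcd by simp
      with \<open>{c..d} \<subseteq> {a..b}\<close> have "a \<le> c" "d \<le> b" by auto
      with \<open>c < d\<close> Kcd show ?thesis by blast
    qed
    have "\<exists>p\<in>K. \<forall>x\<in>K. g p \<le> g x" "\<exists>q\<in>K. \<forall>x\<in>K. g x \<le> g q" if "K \<in> \<D>" for K
    proof -
      obtain c d where "a \<le> c \<and> c < d \<and> d \<le> b \<and> K = {c..d}"
        using intervals[OF \<open>K \<in> \<D>\<close>] by (elim exE)
      then have K: "K = {c..d}" "c < d" "K \<subseteq> {a..b}" by auto
      from K(3) have cont: "continuous_on K g"
        by (rule continuous_on_subset[OF abs_continuous_on_imp_continuous_on[OF ac]])
      have "compact K" "K \<noteq> {}" using K by auto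
      then show "\<exists>p\<in>K. \<forall>x\<in>K. g p \<le> g x" "\<exists>q\<in>K. \<forall>x\<in>K. g x \<le> g q"
        using continuous_attains_inf[OF _ _ cont] continuous_attains_sup[OF _ _ cont] by blast+
    qed
    then obtain p q where p: "\<And>K. K \<in> \<D> \<Longrightarrow> p K \<in> K \<and> (\<forall>x\<in>K. g (p K) \<le> g x)"
      and q: "\<And>K. K \<in> \<D> \<Longrightarrow> q K \<in> K \<and> (\<forall>x\<in>K. g x \<le> g (q K))"
      by metis
    define I where "I K = {g (p K)..g (q K)}" for K
    have bound: "measure lebesgue (\<Union>\<E>) \<le> e" if E: "\<E> \<subseteq> I ` \<D>" "finite \<E>" for \<E>
    proof -
      obtain \<F> where \<F>: "\<F> \<subseteq> \<D>" "finite \<F>" "\<E> = I ` \<F>"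
        using finite_subset_image[OF E(2,1)] by blast
      have "measure lebesgue (\<Union>\<E>) \<le> (\<Sum>K\<in>\<F>. measure lebesgue (I K))"
        unfolding \<F>(3) by (rule measure_UNION_le[OF \<F>(2)]) (simp add: I_def)
      also have "\<dots> = (\<Sum>K\<in>\<F>. norm (g (q K) - g (p K)))"
        using p q \<F>(1) by (intro sum.cong) (auto simp: I_def)
      also have "\<dots> < e"
      proof (rule sum_abs_continuous_on_interval_family[OF small \<F>(2)])
        show "pairwise (\<lambda>K K'. interior K \<inter> interior K' = {}) \<F>"
          using disjoint \<F>(1) pairwise_subset by blast
        have "K \<in> sets lebesgue" if "K \<in> \<F>" for K
          using intervals[of K] \<F>(1) that lmeasurable_interval(1) fmeasurableD by blast
        then have "measure lebesgue (\<Union>\<F>) \<le> measure lebesgue (\<Union>\<D>)"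
          using \<F> \<open>\<Union>\<D> \<in> lmeasurable\<close> by (intro measure_mono_fmeasurable) auto
        with measure_\<D> show "measure lebesgue (\<Union>\<F>) < \<delta>" by simp
      qed (use intervals p q \<F>(1) in auto)
      finally show ?thesis by simp
    qed
    have "D \<in> lmeasurable" if "D \<in> I ` \<D>" for D using that by (auto simp: I_def)
    then have "\<Union>(I ` \<D>) \<in> lmeasurable" "measure lebesgue (\<Union>(I ` \<D>)) \<le> e"
      using fmeasurable_Union_bound[OF countable_image[OF \<open>countable \<D>\<close>] _ bound]
        measure_Union_bound[OF countable_image[OF \<open>countable \<D>\<close>] _ bound] by blast+
    moreover have "g ` N \<subseteq> \<Union>(I ` \<D>)"
      using cover p q unfolding I_def by fastforce
    ultimately show "\<exists>T. g ` N \<subseteq> T \<and> T \<in> lmeasurable \<and> measure lebesgue T \<le> e" by blast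
  qed
qed

lemma first_crossing_below:
  fixes f :: "real \<Rightarrow> real"
  assumes cont: "continuous_on {a..b} f" and "y < f a" "f b \<le> y" "a \<le> b"
  obtains c where "a < c" "c \<le> b" "f c = y" "\<And>s. a \<le> s \<Longrightarrow> s < c \<Longrightarrow> y < f s"
proof -
  define S where "S = {a..b} \<inter> f -` {..y}"
  have "b \<in> S" unfolding S_def using assms by auto
  have "closed S" unfolding S_def by (rule continuous_closed_preimage[OF cont]) auto
  have "bdd_below S" unfolding S_def by (rule bdd_belowI[of _ a]) auto
  define c where "c = Inf S"
  have "c \<in> S" unfolding c_def using closed_contains_Inf[OF _ \<open>bdd_below S\<close> \<open>closed S\<close>] \<open>b \<in> S\<close> by blast
  then have c: "a \<le> c" "c \<le> b" "f c \<le> y" unfolding S_def by auto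
  have before: "y < f s" if "a \<le> s" "s < c" for s
  proof (rule ccontr)
    assume "\<not> y < f s"
    then have "s \<in> S" unfolding S_def using that c by auto
    then show False using cInf_lower[OF _ \<open>bdd_below S\<close>] that unfolding c_def by fastforce
  qed
  have "a < c" using c \<open>y < f a\<close> by (cases "a = c") auto
  moreover have "f c = y"
  proof (rule ccontr)
    assume "f c \<noteq> y"
    then have "f c < y" using c by simp
    moreover have "continuous_on {a..c} f" using continuous_on_subset[OF cont] c by auto
    ultimately obtain s where "a \<le> s" "s \<le> c" "f s = y"
      using IVT2'[of f c y a] \<open>y < f a\<close> c by auto
    moreover have "s \<noteq> c" using \<open>f s = y\<close> \<open>f c \<noteq> y\<close> by auto
    ultimately show False using before[of s] by auto
  qed
  ultimately show ?thesis using that c(2) before by blast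
qed

lemma abs_continuous_on_mono:
  fixes g :: "real \<Rightarrow> real"
  assumes ac: "abs_continuous_on a b g" and "a \<le> b"
    and deriv: "AE s in lebesgue. s \<in> {a<..<b} \<longrightarrow> (\<exists>D\<ge>0. (g has_real_derivative D) (at s))"
  shows "g a \<le> g b"
proof -
  obtain N0 where "N0 \<in> null_sets lebesgue"
    and N0: "{s \<in> space lebesgue. \<not> (s \<in> {a<..<b} \<longrightarrow> (\<exists>D\<ge>0. (g has_real_derivative D) (at s)))} \<subseteq> N0"
    using deriv unfolding eventually_ae_filter by blast
  define N where "N = (N0 \<inter> {a..b}) \<union> {a, b}"
  have "negligible N0" using \<open>N0 \<in> null_sets lebesgue\<close> by (simp add: negligible_iff_null_sets)
  then have "negligible (N0 \<inter> {a..b})" by (rule negligible_subset) simp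
  then have "negligible N" unfolding N_def by (intro negligible_Un) auto
  have "N \<subseteq> {a..b}" unfolding N_def using \<open>a \<le> b\<close> by auto
  have derivative: "\<exists>D\<ge>0. (g has_real_derivative D) (at s)" if "s \<in> {a..b}" "s \<notin> N" for s
  proof -
    have "s \<in> {a<..<b}" "s \<notin> N0" using that unfolding N_def by auto
    show ?thesis
    proof (rule ccontr)
      assume "\<not> ?thesis"
      with \<open>s \<in> {a<..<b}\<close> have "s \<in> N0" using N0 by auto
      with \<open>s \<notin> N0\<close> show False by contradiction
    qed
  qed
  have slack: "g a \<le> g b + \<epsilon> * (b - a)" if "\<epsilon> > 0" for \<epsilon>
  proof (rule ccontr)
    define h where "h s = g s + \<epsilon> * s" for s
    assume "\<not> g a \<le> g b + \<epsilon> * (b - a)"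
    then have "h b < h a" unfolding h_def by (simp add: algebra_simps)
    have "abs_continuous_on a b (\<lambda>s. \<epsilon> * s)"
      by (rule lipschitz_on_imp_abs_continuous_on[OF lipschitz_on_cmult_real[OF lipschitz_on_id]])
    then have ac_h: "abs_continuous_on a b h" unfolding h_def by (rule abs_continuous_on_add[OF ac])
    have "negligible (h ` N)"
      by (rule negligible_abs_continuous_image[OF ac_h \<open>negligible N\<close> \<open>N \<subseteq> {a..b}\<close>])
    moreover have "\<not> negligible {h b<..<h a}" using \<open>h b < h a\<close> by (simp add: open_not_negligible)
    ultimately have "\<not> {h b<..<h a} \<subseteq> h ` N" using negligible_subset by blast
    then obtain y where "y \<in> {h b<..<h a}" "y \<notin> h ` N" by blast
    then have y: "h b < y" "y < h a" "y \<notin> h ` N" by auto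
    obtain c where c: "a < c" "c \<le> b" "h c = y" and above: "\<And>s. a \<le> s \<Longrightarrow> s < c \<Longrightarrow> y < h s"
      using abs_continuous_on_imp_continuous_on[OF ac_h] \<open>y < h a\<close> less_imp_le[OF \<open>h b < y\<close>] \<open>a \<le> b\<close>
      by (rule first_crossing_below) blast
    have "c \<notin> N" using c y(3) by blast
    moreover have "c \<in> {a..b}" using c by simp
    ultimately obtain D where "D \<ge> 0" "(g has_real_derivative D) (at c)" using derivative by blast
    then have "(h has_real_derivative D + \<epsilon>) (at c)" "D + \<epsilon> > 0"
      unfolding h_def using \<open>\<epsilon> > 0\<close> by (auto intro!: derivative_eq_intros)
    then obtain d where "d > 0" and left: "\<And>k. k > 0 \<Longrightarrow> k < d \<Longrightarrow> h (c - k) < h c"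
      using DERIV_pos_inc_left by blast
    define k where "k = min d (c - a) / 2"
    have "k > 0" "k < d" "a \<le> c - k" "c - k < c" using \<open>d > 0\<close> c(1) unfolding k_def by (auto simp: min_def field_simps)
    then have "h (c - k) < y" "y < h (c - k)" using left[of k] above[of "c - k"] c(3) by auto
    then show False by simp
  qed
  show ?thesis
  proof (cases "a = b")
    case False
    with \<open>a \<le> b\<close> have "b - a > 0" by simp
    show ?thesis
    proof (rule field_le_epsilon)
      fix e :: real assume "e > 0"
      then show "g a \<le> g b + e" using slack[of "e / (b - a)"] \<open>b - a > 0\<close> by simp
    qed
  qed simp
qed

lemma abs_continuous_on_stays_above:
  fixes g :: "real \<Rightarrow> real"
  assumes ac: "abs_continuous_on a b g" and "a \<le> b" and "y < g a"
    and deriv: "AE s in lebesgue. s \<in> {a<..<b} \<longrightarrow> y < g s \<longrightarrow> (\<exists>D\<ge>0. (g has_real_derivative D) (at s))"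
  shows "y < g b"
proof (rule ccontr)
  assume "\<not> y < g b"
  then have "g b \<le> y" by simp
  obtain c where c: "a < c" "c \<le> b" "g c = y" and above: "\<And>s. a \<le> s \<Longrightarrow> s < c \<Longrightarrow> y < g s"
    using abs_continuous_on_imp_continuous_on[OF ac] \<open>y < g a\<close> \<open>g b \<le> y\<close> \<open>a \<le> b\<close>
    by (rule first_crossing_below) blast
  have "g a \<le> g c"
  proof (rule abs_continuous_on_mono[of a c g])
    show "abs_continuous_on a c g" using abs_continuous_on_subinterval[OF ac order_refl \<open>c \<le> b\<close>] .
    show "AE s in lebesgue. s \<in> {a<..<c} \<longrightarrow> (\<exists>D\<ge>0. (g has_real_derivative D) (at s))"
      using deriv by eventually_elim (use c above in auto)
  qed (use c in simp)
  with \<open>y < g a\<close> c(3) show False by simp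
qed

section \<open>Ellipsoids\<close>

definition ellipsoid_level :: "real^'n \<Rightarrow> real^'n^'n \<Rightarrow> real^'n \<Rightarrow> real" where
  "ellipsoid_level q Q x = (x - q) \<bullet> (matrix_inv Q *v (x - q))"

lemma mem_ellipsoid_iff: "x \<in> ellipsoid q Q \<longleftrightarrow> ellipsoid_level q Q x \<le> 1"
  by (simp add: ellipsoid_def ellipsoid_level_def)

lemma continuous_on_ellipsoid_level: "continuous_on S (ellipsoid_level q Q)"
  unfolding ellipsoid_level_def
  by (intro continuous_intros bounded_linear.continuous_on[OF matrix_vector_mul_bounded_linear])

lemma ellipsoid_level_radial:
  "ellipsoid_level q Q (q + c *\<^sub>R (x - q)) = c\<^sup>2 * ellipsoid_level q Q x"
  by (simp add: ellipsoid_level_def matrix_vector_mult_scaleR power2_eq_square)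

lemma frontier_ellipsoid: "frontier (ellipsoid q Q) = {x. ellipsoid_level q Q x = 1}"
proof -
  have E: "ellipsoid q Q = {x. ellipsoid_level q Q x \<le> 1}" by (auto simp: mem_ellipsoid_iff)
  have "closed (ellipsoid q Q)"
    unfolding E by (rule closed_Collect_le[OF continuous_on_ellipsoid_level continuous_on_const])
  have "interior (ellipsoid q Q) = {x. ellipsoid_level q Q x < 1}"
  proof
    have "open {x. ellipsoid_level q Q x < 1}"
      by (rule open_Collect_less[OF continuous_on_ellipsoid_level continuous_on_const])
    then show "{x. ellipsoid_level q Q x < 1} \<subseteq> interior (ellipsoid q Q)"
      by (intro interior_maximal) (auto simp: E)
    show "interior (ellipsoid q Q) \<subseteq> {x. ellipsoid_level q Q x < 1}"
    proof
      fix x assume x: "x \<in> interior (ellipsoid q Q)"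
      then obtain e where "e > 0" and ball: "ball x e \<subseteq> ellipsoid q Q" using mem_interior by blast
      have "ellipsoid_level q Q x \<noteq> 1"
      proof
        assume level: "ellipsoid_level q Q x = 1"
        define n where "n = norm (x - q) + 1"
        define \<tau> where "\<tau> = e / (2 * n)"
        have "n > 0" unfolding n_def by (simp add: add_nonneg_pos)
        then have "\<tau> > 0" "\<tau> * n = e / 2" using \<open>e > 0\<close> unfolding \<tau>_def by simp_all
        have "q + (1 + \<tau>) *\<^sub>R (x - q) - x = \<tau> *\<^sub>R (x - q)" by (simp add: algebra_simps)
        then have "dist x (q + (1 + \<tau>) *\<^sub>R (x - q)) = \<tau> * norm (x - q)"
          using \<open>\<tau> > 0\<close> by (metis abs_of_pos dist_commute dist_norm norm_scaleR)
        also have "\<dots> < \<tau> * n" using \<open>\<tau> > 0\<close> unfolding n_def by simp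
        also have "\<dots> < e" using \<open>e > 0\<close> \<open>\<tau> * n = e / 2\<close> by simp
        finally have "(1 + \<tau>)\<^sup>2 \<le> 1"
          using ball level ellipsoid_level_radial[of q Q "1 + \<tau>" x] by (auto simp: E)
        moreover have "(1 + \<tau>)\<^sup>2 > 1" using \<open>\<tau> > 0\<close> by (simp add: power2_eq_square algebra_simps add_pos_pos)
        ultimately show False by simp
      qed
      moreover have "ellipsoid_level q Q x \<le> 1" using interior_subset x by (auto simp: E)
      ultimately show "x \<in> {x. ellipsoid_level q Q x < 1}" by simp
    qed
  qed
  with \<open>closed (ellipsoid q Q)\<close> show ?thesis by (auto simp: frontier_def E)
qed

lemma abs_inner_ellipsoid_le:
  fixes P :: "real^'m^'m"
  assumes P: "spd P" and u: "u \<in> ellipsoid p P"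
  shows "\<bar>c \<bullet> (u - p)\<bar> \<le> sqrt (c \<bullet> (P *v c))"
proof -
  have "spd (matrix_inv P)" using P by (rule spd_matrix_inv)
  then have spsd: "spsd (matrix_inv P)" by (rule spd_imp_spsd)
  define R where "R = msqrt (matrix_inv P)"
  have "transpose R = R" using spsd_msqrt[OF spsd] spsd_def R_def by auto
  have inv: "invertible P" using P by (rule spd_imp_invertible)
  have "c \<bullet> (u - p) = (matrix_inv P *v (P *v c)) \<bullet> (u - p)"
    by (simp add: matrix_inv_vector_cancel_left[OF inv])
  also have "\<dots> = (R *v (P *v c)) \<bullet> (R *v (u - p))"
    using inner_symmetric_matrix_vector[OF \<open>transpose R = R\<close>, of "R *v (P *v c)" "u - p"]
    by (simp add: R_def matrix_vector_mul_assoc matrix_mul_assoc msqrt_square[OF spsd])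
  finally have "\<bar>c \<bullet> (u - p)\<bar> \<le> norm (R *v (P *v c)) * norm (R *v (u - p))"
    using Cauchy_Schwarz_ineq2 by simp
  also have "\<dots> \<le> norm (R *v (P *v c)) * 1"
  proof (rule mult_left_mono)
    show "norm (R *v (u - p)) \<le> 1"
      using u by (simp add: R_def norm_msqrt_mult_vector[OF spsd] ellipsoid_def)
  qed simp
  also have "norm (R *v (P *v c)) = sqrt (c \<bullet> (P *v c))"
    by (simp add: R_def norm_msqrt_mult_vector[OF spsd] matrix_inv_vector_cancel_left[OF inv] inner_commute)
  finally show ?thesis by simp
qed

lemma ellipsoid_arg_max_inner:
  fixes P :: "real^'m^'m"
  assumes P: "spd P" and max: "is_arg_max (\<lambda>u. c \<bullet> u) (\<lambda>u. u \<in> ellipsoid p P) u0"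
  shows "c \<bullet> (u0 - p) = sqrt (c \<bullet> (P *v c))"
proof (rule antisym)
  have u0: "u0 \<in> ellipsoid p P" and opt: "\<And>u. u \<in> ellipsoid p P \<Longrightarrow> c \<bullet> u \<le> c \<bullet> u0"
    using max unfolding is_arg_max_def by (auto simp: not_less)
  show "c \<bullet> (u0 - p) \<le> sqrt (c \<bullet> (P *v c))" using abs_inner_ellipsoid_le[OF P u0, of c] by linarith
  show "sqrt (c \<bullet> (P *v c)) \<le> c \<bullet> (u0 - p)"
  proof (cases "c = 0")
    case False
    define \<sigma> where "\<sigma> = sqrt (c \<bullet> (P *v c))"
    have pos: "c \<bullet> (P *v c) > 0" using P False unfolding spd_def by blast
    then have "\<sigma> > 0" "\<sigma> * \<sigma> = c \<bullet> (P *v c)" unfolding \<sigma>_def by simp_all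
    define u1 where "u1 = p + (1 / \<sigma>) *\<^sub>R (P *v c)"
    have inv: "invertible P" using P by (rule spd_imp_invertible)
    have "ellipsoid_level p P u1 = (1 / \<sigma>)\<^sup>2 * ((P *v c) \<bullet> c)"
      by (simp add: u1_def ellipsoid_level_def matrix_vector_mult_scaleR power2_eq_square
          matrix_inv_vector_cancel_left[OF inv])
    also have "\<dots> = 1" using \<open>\<sigma> * \<sigma> = _\<close> pos by (simp add: inner_commute power2_eq_square)
    finally have "c \<bullet> u1 \<le> c \<bullet> u0" by (intro opt) (simp add: mem_ellipsoid_iff)
    moreover have "c \<bullet> (u1 - p) = \<sigma>"
      using \<open>\<sigma> > 0\<close> \<open>\<sigma> * \<sigma> = _\<close> pos by (simp add: u1_def field_simps)
    ultimately show ?thesis unfolding \<sigma>_def by (simp add: inner_diff_right)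
  qed simp
qed

section \<open>The level function of an ellipsoidal tube\<close>

lemma lyapunov_rate_identity:
  fixes A Q M Q' :: "real^'n^'n" and B :: "real^'m^'n" and P :: "real^'m^'m"
    and w :: "real^'n" and v :: "real^'m"
  assumes symQ: "transpose Q = Q" and symM: "transpose M = M" and QM: "Q ** M = mat 1"
    and Q': "Q' = A ** Q + Q ** transpose A - ((1 / k) *\<^sub>R (B ** P ** transpose B) + k *\<^sub>R Q)"
  defines "d \<equiv> transpose B *v (M *v w)"
  shows "w \<bullet> (M *v (A *v w + B *v v) + (- (M ** Q' ** M)) *v w) + (A *v w + B *v v) \<bullet> (M *v w)
       = 2 * (d \<bullet> v) + (d \<bullet> (P *v d)) / k + k * (w \<bullet> (M *v w))"
proof -
  define c where "c = M *v w"
  have Qc: "Q *v c = w" unfolding c_def by (simp add: matrix_vector_mul_assoc QM)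
  have Bc: "c \<bullet> (B *v x) = d \<bullet> x" for x
    unfolding d_def c_def by (rule inner_matrix_vector_transpose)
  have QAc: "c \<bullet> (Q *v (transpose A *v c)) = c \<bullet> (A *v w)"
    by (metis Qc inner_commute inner_matrix_vector_transpose inner_symmetric_matrix_vector symQ transpose_transpose)
  have "c \<bullet> (Q' *v c) = 2 * (c \<bullet> (A *v w)) - (d \<bullet> (P *v d)) / k - k * (c \<bullet> w)"
    unfolding Q' using QAc Bc[of "P *v d"] Qc
    by (simp add: matrix_vector_mult_add_rdistrib matrix_vector_mult_diff_rdistrib inner_add_right
        inner_diff_right d_def c_def inner_commute
        flip: matrix_vector_mul_assoc scaleR_matrix_vector_assoc del: transpose_matrix_vector)
  moreover have "w \<bullet> ((- (M ** Q' ** M)) *v w) = - (c \<bullet> (Q' *v c))"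
    unfolding c_def
    by (simp add: bounded_bilinear.minus_left[OF bounded_bilinear_matrix_vector_mult]
        inner_symmetric_matrix_vector[OF symM] matrix_vector_mul_assoc[symmetric])
  moreover have "w \<bullet> (M *v x) = c \<bullet> x" "x \<bullet> (M *v w) = c \<bullet> x" for x
    unfolding c_def using inner_symmetric_matrix_vector[OF symM] by (auto simp: inner_commute)
  ultimately show ?thesis
    by (simp add: inner_add_right Bc algebra_simps)
qed

lemma lyapunov_rate_nonneg:
  fixes a \<kappa> V :: real
  assumes "\<kappa> > 0" "V \<ge> 1"
  shows "0 \<le> - 2 * a + a\<^sup>2 / \<kappa> + \<kappa> * V"
proof -
  have "- 2 * a + a\<^sup>2 / \<kappa> + \<kappa> = (a - \<kappa>)\<^sup>2 / \<kappa>"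
    using assms(1) by (simp add: power2_eq_square field_simps)
  moreover have "\<kappa> \<le> \<kappa> * V" using assms by simp
  ultimately show ?thesis using assms(1) by (smt (verit) divide_nonneg_pos zero_le_power2)
qed

lemma lyapunov_rate_sign:
  fixes a \<kappa> r :: real
  assumes "r > 0" "\<kappa> > 0" "\<kappa> = a / r"
  shows "0 \<le> (r\<^sup>2 - 1) * (- 2 * a + a\<^sup>2 / \<kappa> + \<kappa> * r\<^sup>2)"
proof -
  have "a = \<kappa> * r" using assms by simp
  then have "(r\<^sup>2 - 1) * (- 2 * a + a\<^sup>2 / \<kappa> + \<kappa> * r\<^sup>2) = 2 * a * (r + 1) * (r - 1)\<^sup>2"
    using assms(2) by (simp add: power2_eq_square field_simps)
  moreover have "a > 0" using \<open>a = \<kappa> * r\<close> assms(1,2) by simp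
  ultimately show ?thesis using assms(1) by simp
qed

locale ellipsoidal_tube =
  fixes T :: real and A :: "real \<Rightarrow> real^'n^'n" and B :: "real \<Rightarrow> real^'m^'n"
    and p :: "real^'m" and P :: "real^'m^'m"
    and \<kappa> :: "real \<Rightarrow> real" and q :: "real \<Rightarrow> real^'n" and Q :: "real \<Rightarrow> real^'n^'n"
  assumes A_cont: "continuous_on {0..T} A" and B_cont: "continuous_on {0..T} B"
    and P_spd: "spd P"
    and \<kappa>_cont: "continuous_on {0..T} \<kappa>" and \<kappa>_pos: "\<And>s. s \<in> {0..T} \<Longrightarrow> \<kappa> s > 0"
    and q_ode: "\<And>s. s \<in> {0..T} \<Longrightarrow>
      (q has_vector_derivative (A s *v q s + B s *v p)) (at s within {0..T})"
    and Q_ode: "\<And>s. s \<in> {0..T} \<Longrightarrow>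
      (Q has_vector_derivative (A s ** Q s + Q s ** transpose (A s)
        - ((1 / \<kappa> s) *\<^sub>R (B s ** P ** transpose (B s)) + \<kappa> s *\<^sub>R Q s))) (at s within {0..T})"
    and Q_spd: "\<And>s. s \<in> {0..T} \<Longrightarrow> spd (Q s)"
begin

definition level :: "(real \<Rightarrow> real^'n) \<Rightarrow> real \<Rightarrow> real" where
  "level x s = ellipsoid_level (q s) (Q s) (x s)"

definition input_gradient :: "(real \<Rightarrow> real^'n) \<Rightarrow> real \<Rightarrow> real^'m" where
  "input_gradient x s = transpose (B s) *v (matrix_inv (Q s) *v (x s - q s))"

lemma matrix_inv_Q_has_derivative:
  assumes "s \<in> {0..T}"
  shows "((\<lambda>s. matrix_inv (Q s)) has_vector_derivative
    - (matrix_inv (Q s) ** (A s ** Q s + Q s ** transpose (A s)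
        - ((1 / \<kappa> s) *\<^sub>R (B s ** P ** transpose (B s)) + \<kappa> s *\<^sub>R Q s)) ** matrix_inv (Q s)))
    (at s within {0..T})"
  using Q_ode[OF assms] spd_imp_invertible[OF Q_spd] assms by (rule has_vector_derivative_matrix_inv)

lemma abs_continuous_on_q_matrix_inv_Q:
  assumes "t \<in> {0..T}"
  shows "abs_continuous_on t T q" "abs_continuous_on t T (\<lambda>s. matrix_inv (Q s))"
proof -
  have cont: "continuous_on {0..T} f" if "\<And>s. s \<in> {0..T} \<Longrightarrow> (f has_vector_derivative f' s) (at s within {0..T})"
    for f :: "real \<Rightarrow> 'a::real_normed_vector" and f'
    using that has_vector_derivative_continuous continuous_on_eq_continuous_within by blast
  have "continuous_on {0..T} q" "continuous_on {0..T} Q" "continuous_on {0..T} (\<lambda>s. matrix_inv (Q s))"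
    using cont[OF q_ode] cont[OF Q_ode] cont[OF matrix_inv_Q_has_derivative] by auto
  moreover have "\<kappa> s \<noteq> 0" if "s \<in> {0..T}" for s using \<kappa>_pos[OF that] by simp
  ultimately have "abs_continuous_on 0 T q" "abs_continuous_on 0 T (\<lambda>s. matrix_inv (Q s))"
    using A_cont B_cont \<kappa>_cont
    by (auto intro!: abs_continuous_on_if_continuous_derivative[OF q_ode]
        abs_continuous_on_if_continuous_derivative[OF matrix_inv_Q_has_derivative] continuous_intros)
  then show "abs_continuous_on t T q" "abs_continuous_on t T (\<lambda>s. matrix_inv (Q s))"
    using assms by (auto intro: abs_continuous_on_subinterval)
qed

lemma level_along_solution:
  assumes t: "t \<in> {0..T}" and sol: "is_solution A B t T u x"
  shows abs_continuous_on_level: "abs_continuous_on t T (level x)"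
    and level_has_derivative: "AE s in lebesgue. s \<in> {t<..<T} \<longrightarrow> (level x has_real_derivative
      2 * (input_gradient x s \<bullet> (u s - p)) + (input_gradient x s \<bullet> (P *v input_gradient x s)) / \<kappa> s
      + \<kappa> s * level x s) (at s)"
proof -
  have x_ac: "abs_continuous_on t T x"
    and x_ode: "AE s in lebesgue. s \<in> {t<..<T} \<longrightarrow> (x has_vector_derivative (A s *v x s + B s *v u s)) (at s)"
    using sol unfolding is_solution_def by auto
  have level: "level x = (\<lambda>s. (x s - q s) \<bullet> (matrix_inv (Q s) *v (x s - q s)))"
    by (simp add: level_def ellipsoid_level_def fun_eq_iff)
  have w_ac: "abs_continuous_on t T (\<lambda>s. x s - q s)"
    using x_ac abs_continuous_on_q_matrix_inv_Q(1)[OF t] by (rule abs_continuous_on_diff)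
  show "abs_continuous_on t T (level x)"
    unfolding level using abs_continuous_on_bilinear[OF bounded_bilinear_inner w_ac
      abs_continuous_on_bilinear[OF bounded_bilinear_matrix_vector_mult
        abs_continuous_on_q_matrix_inv_Q(2)[OF t] w_ac]] .
  show "AE s in lebesgue. s \<in> {t<..<T} \<longrightarrow> (level x has_real_derivative
      2 * (input_gradient x s \<bullet> (u s - p)) + (input_gradient x s \<bullet> (P *v input_gradient x s)) / \<kappa> s
      + \<kappa> s * level x s) (at s)"
    using x_ode
  proof (rule eventually_mono, intro impI)
    fix s assume "s \<in> {t<..<T}"
      and "s \<in> {t<..<T} \<longrightarrow> (x has_vector_derivative A s *v x s + B s *v u s) (at s)"
    then have s: "s \<in> {0..T}" and at: "at s within {0..T} = at s"
      and dx: "(x has_vector_derivative A s *v x s + B s *v u s) (at s)"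
      using t at_within_Icc_at[of 0 s T] by auto
    let ?Q' = "A s ** Q s + Q s ** transpose (A s)
        - ((1 / \<kappa> s) *\<^sub>R (B s ** P ** transpose (B s)) + \<kappa> s *\<^sub>R Q s)"
    let ?M = "matrix_inv (Q s)" and ?w = "x s - q s" and ?w' = "A s *v (x s - q s) + B s *v (u s - p)"
    have dw: "((\<lambda>s. x s - q s) has_vector_derivative ?w') (at s)"
      using has_vector_derivative_diff[OF dx q_ode[OF s, unfolded at]]
      by (simp add: matrix_vector_mult_diff_distrib algebra_simps)
    have dMw: "((\<lambda>s. matrix_inv (Q s) *v (x s - q s)) has_vector_derivative
        ?M *v ?w' + (- (?M ** ?Q' ** ?M)) *v ?w) (at s)"
      using bounded_bilinear.has_vector_derivative[OF bounded_bilinear_matrix_vector_mult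
          matrix_inv_Q_has_derivative[OF s, unfolded at] dw] by simp
    have "(level x has_vector_derivative ?w \<bullet> (?M *v ?w' + (- (?M ** ?Q' ** ?M)) *v ?w) + ?w' \<bullet> (?M *v ?w)) (at s)"
      unfolding level using bounded_bilinear.has_vector_derivative[OF bounded_bilinear_inner dw dMw] by simp
    moreover have "transpose (Q s) = Q s" "transpose ?M = ?M" "Q s ** ?M = mat 1"
      using Q_spd[OF s] spd_matrix_inv[OF Q_spd[OF s]] matrix_inv_right[OF spd_imp_invertible[OF Q_spd[OF s]]]
      unfolding spd_def by auto
    ultimately show "(level x has_real_derivative
        2 * (input_gradient x s \<bullet> (u s - p)) + (input_gradient x s \<bullet> (P *v input_gradient x s)) / \<kappa> s
        + \<kappa> s * level x s) (at s)"
      unfolding has_real_derivative_iff_has_vector_derivative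
      by (simp add: lyapunov_rate_identity input_gradient_def level_def ellipsoid_level_def)
  qed
qed

lemma level_le_one_backward:
  assumes t: "t \<in> {0..T}" and sol: "is_solution A B t T u x"
    and u: "\<And>s. s \<in> {t..T} \<Longrightarrow> u s \<in> ellipsoid p P" and "level x T \<le> 1"
  shows "level x t \<le> 1"
proof (rule ccontr)
  assume "\<not> level x t \<le> 1"
  then have "1 < level x T"
  proof (intro abs_continuous_on_stays_above[OF abs_continuous_on_level[OF t sol]])
    show "AE s in lebesgue. s \<in> {t<..<T} \<longrightarrow> 1 < level x s \<longrightarrow>
        (\<exists>D\<ge>0. (level x has_real_derivative D) (at s))"
      using level_has_derivative[OF t sol]
    proof (rule eventually_mono, intro impI)
      fix s assume s: "s \<in> {t<..<T}" and "1 < level x s"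
        and "s \<in> {t<..<T} \<longrightarrow> (level x has_real_derivative
          2 * (input_gradient x s \<bullet> (u s - p)) + (input_gradient x s \<bullet> (P *v input_gradient x s)) / \<kappa> s
          + \<kappa> s * level x s) (at s)"
      moreover define d where "d = input_gradient x s"
      moreover have "0 \<le> 2 * (d \<bullet> (u s - p)) + (d \<bullet> (P *v d)) / \<kappa> s + \<kappa> s * level x s"
      proof -
        define a where "a = sqrt (d \<bullet> (P *v d))"
        have "\<bar>d \<bullet> (u s - p)\<bar> \<le> a"
          using abs_inner_ellipsoid_le[OF P_spd u] s unfolding a_def by simp
        moreover have "a\<^sup>2 = d \<bullet> (P *v d)"
          using spd_imp_spsd[OF P_spd] unfolding spsd_def a_def by simp
        moreover have "0 \<le> - 2 * a + a\<^sup>2 / \<kappa> s + \<kappa> s * level x s"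
          using \<kappa>_pos \<open>1 < level x s\<close> s t by (intro lyapunov_rate_nonneg) auto
        ultimately show ?thesis by (simp add: abs_le_iff)
      qed
      ultimately show "\<exists>D\<ge>0. (level x has_real_derivative D) (at s)" by blast
    qed
  qed (use t in auto)
  with \<open>level x T \<le> 1\<close> show False by simp
qed

lemma backward_reach_subset_ellipsoid:
  assumes "t \<in> {0..T}"
  shows "backward_reach A B (ellipsoid p P) (ellipsoid (q T) (Q T)) T t \<subseteq> ellipsoid (q t) (Q t)"
proof
  fix x0 assume "x0 \<in> backward_reach A B (ellipsoid p P) (ellipsoid (q T) (Q T)) T t"
  then obtain u x where "u \<in> admissible_controls t T (ellipsoid p P)" "is_solution A B t T u x"
    "x t = x0" "x T \<in> ellipsoid (q T) (Q T)"
    unfolding backward_reach_def by blast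
  then show "x0 \<in> ellipsoid (q t) (Q t)"
    using level_le_one_backward[OF assms, of u x]
    by (auto simp: admissible_controls_def level_def mem_ellipsoid_iff)
qed

lemma level_rate_sign:
  assumes s: "s \<in> {0..T}"
    and max: "is_arg_max (\<lambda>v. (- (minvsqrt (Q s) *v (minvsqrt (Q s) *v (x s - q s)))) \<bullet> (B s *v v))
      (\<lambda>v. v \<in> ellipsoid p P) (u s)"
    and \<kappa>_choice: "minvsqrt (Q s) *v (x s - q s) \<noteq> 0 \<longrightarrow> \<kappa> s =
      norm (msqrt (minvsqrt (Q s) ** B s ** P ** transpose (B s) ** minvsqrt (Q s))
        *v (minvsqrt (Q s) *v (x s - q s))) / norm (minvsqrt (Q s) *v (x s - q s))"
  shows "0 \<le> (level x s - 1) * (2 * (input_gradient x s \<bullet> (u s - p))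
    + (input_gradient x s \<bullet> (P *v input_gradient x s)) / \<kappa> s + \<kappa> s * level x s)"
proof -
  define N where "N = minvsqrt (Q s)"
  define w where "w = x s - q s"
  define d where "d = input_gradient x s"
  define a where "a = sqrt (d \<bullet> (P *v d))"
  have symN: "transpose N = N" and NN: "N *v (N *v w) = matrix_inv (Q s) *v w"
    unfolding N_def using Q_spd[OF s]
    by (simp_all add: symmetric_minvsqrt minvsqrt_square matrix_vector_mul_assoc)
  have d: "d = transpose (B s) *v (N *v (N *v w))"
    using NN unfolding d_def input_gradient_def w_def by (simp del: transpose_matrix_vector)
  have "(- (N *v (N *v w))) \<bullet> (B s *v v) = (- d) \<bullet> v" for v
    unfolding d by (simp add: inner_matrix_vector_transpose bounded_bilinear.minus_right[OF bounded_bilinear_matrix_vector_mult] del: transpose_matrix_vector)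
  then have "is_arg_max (\<lambda>v. (- d) \<bullet> v) (\<lambda>v. v \<in> ellipsoid p P) (u s)"
    using max unfolding N_def w_def by simp
  from ellipsoid_arg_max_inner[OF P_spd this] have du: "d \<bullet> (u s - p) = - a"
    unfolding a_def by (simp add: bounded_bilinear.minus_right[OF bounded_bilinear_matrix_vector_mult])
  have "level x s = w \<bullet> (matrix_inv (Q s) *v w)" unfolding level_def ellipsoid_level_def w_def ..
  also have "\<dots> = (N *v w) \<bullet> (N *v w)"
    using inner_symmetric_matrix_vector[OF symN, of w "N *v w"] by (simp add: NN)
  finally have level: "level x s = (N *v w) \<bullet> (N *v w)" .
  have a2: "a\<^sup>2 = d \<bullet> (P *v d)"
    using spd_imp_spsd[OF P_spd] unfolding spsd_def a_def by simp
  have "0 \<le> (level x s - 1) * (- 2 * a + (d \<bullet> (P *v d)) / \<kappa> s + \<kappa> s * level x s)"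
  proof (cases "N *v w = 0")
    case True
    then show ?thesis using level d a_def by simp
  next
    case False
    define r where "r = norm (N *v w)"
    have "r > 0" "level x s = r\<^sup>2" using False level unfolding r_def by (simp_all add: dot_square_norm)
    define C where "C = N ** B s"
    have C: "N ** B s ** P ** transpose (B s) ** N = C ** P ** transpose C" "transpose C *v (N *v w) = d"
      unfolding C_def d by (simp_all add: matrix_transpose_mul symN matrix_mul_assoc matrix_vector_mul_assoc
          del: transpose_matrix_vector)
    have "norm (msqrt (N ** B s ** P ** transpose (B s) ** N) *v (N *v w)) = a"
      unfolding C a_def
      using norm_msqrt_mult_vector[OF spsd_congruence[OF spd_imp_spsd[OF P_spd]], of C "N *v w"]
        inner_congruence[of "N *v w" C P] C(2)
      by (simp del: transpose_matrix_vector)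
    then have "\<kappa> s = a / r" using \<kappa>_choice False unfolding N_def w_def r_def by simp
    then have "0 \<le> (r\<^sup>2 - 1) * (- 2 * a + a\<^sup>2 / \<kappa> s + \<kappa> s * r\<^sup>2)"
      by (rule lyapunov_rate_sign[OF \<open>r > 0\<close> \<kappa>_pos[OF s]])
    then show ?thesis unfolding \<open>level x s = r\<^sup>2\<close> a2 .
  qed
  then show ?thesis unfolding d_def[symmetric] du by simp
qed

lemma level_eq_one_along_optimal:
  assumes t: "t \<in> {0..T}" and sol: "is_solution A B t T u x"
    and max: "AE s in lebesgue. s \<in> {t<..<T} \<longrightarrow>
      is_arg_max (\<lambda>v. (- (minvsqrt (Q s) *v (minvsqrt (Q s) *v (x s - q s)))) \<bullet> (B s *v v))
        (\<lambda>v. v \<in> ellipsoid p P) (u s)"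
    and \<kappa>_choice: "\<forall>s\<in>{t..T}. minvsqrt (Q s) *v (x s - q s) \<noteq> 0 \<longrightarrow> \<kappa> s =
      norm (msqrt (minvsqrt (Q s) ** B s ** P ** transpose (B s) ** minvsqrt (Q s))
        *v (minvsqrt (Q s) *v (x s - q s))) / norm (minvsqrt (Q s) *v (x s - q s))"
    and "level x T = 1"
  shows "level x t = 1"
proof -
  define g where "g s = (level x s - 1) * (level x s - 1)" for s
  have "abs_continuous_on t T (\<lambda>s. level x s - 1)"
    using abs_continuous_on_level[OF t sol] lipschitz_on_imp_abs_continuous_on[OF lipschitz_on_constant]
    by (rule abs_continuous_on_diff)
  then have "abs_continuous_on t T g"
    unfolding g_def using abs_continuous_on_bilinear[OF bounded_bilinear_mult] by blast
  moreover have "AE s in lebesgue. s \<in> {t<..<T} \<longrightarrow> (\<exists>D\<ge>0. (g has_real_derivative D) (at s))"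
    using level_has_derivative[OF t sol] max
  proof eventually_elim
    case (elim s)
    show ?case
    proof
      assume s: "s \<in> {t<..<T}"
      let ?D = "2 * (input_gradient x s \<bullet> (u s - p))
        + (input_gradient x s \<bullet> (P *v input_gradient x s)) / \<kappa> s + \<kappa> s * level x s"
      have "(level x has_real_derivative ?D) (at s)" using elim s by blast
      then have "(g has_real_derivative 2 * ((level x s - 1) * ?D)) (at s)"
        unfolding g_def by (auto intro!: derivative_eq_intros)
      moreover have "0 \<le> (level x s - 1) * ?D"
      proof (rule level_rate_sign)
        show "s \<in> {0..T}" using s t by auto
        show "is_arg_max (\<lambda>v. (- (minvsqrt (Q s) *v (minvsqrt (Q s) *v (x s - q s)))) \<bullet> (B s *v v))
            (\<lambda>v. v \<in> ellipsoid p P) (u s)" using elim s by blast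
        show "minvsqrt (Q s) *v (x s - q s) \<noteq> 0 \<longrightarrow> \<kappa> s =
            norm (msqrt (minvsqrt (Q s) ** B s ** P ** transpose (B s) ** minvsqrt (Q s))
              *v (minvsqrt (Q s) *v (x s - q s))) / norm (minvsqrt (Q s) *v (x s - q s))"
          using \<kappa>_choice s by simp
      qed
      ultimately show "\<exists>D\<ge>0. (g has_real_derivative D) (at s)" by (intro exI[of _ "2 * ((level x s - 1) * ?D)"]) simp
    qed
  qed
  ultimately have "g t \<le> g T" using t by (intro abs_continuous_on_mono[of t T g]) auto
  then show ?thesis using \<open>level x T = 1\<close> unfolding g_def by (auto simp: mult_le_0_iff)
qed

end

lemma mem_frontier_of_subset:
  assumes "x \<in> S" "S \<subseteq> E" "x \<in> frontier E"
  shows "x \<in> frontier S"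
  using assms closure_subset interior_mono unfolding frontier_def by blast

theorem corollary4:
  fixes T t :: real
    and A :: "real \<Rightarrow> real^'n^'n" and B :: "real \<Rightarrow> real^'m^'n"
    and p :: "real^'m" and P :: "real^'m^'m"
    and xe :: "real^'n" and Xe :: "real^'n^'n"
    and nq i :: nat
    and \<kappa> :: "nat \<Rightarrow> real \<Rightarrow> real"
    and q :: "nat \<Rightarrow> real \<Rightarrow> real^'n" and Q :: "nat \<Rightarrow> real \<Rightarrow> real^'n^'n"
    and ustar :: "real \<Rightarrow> real^'m" and xstar :: "real \<Rightarrow> real^'n"
  assumes T_pos: "T > 0"
    and A_cont: "continuous_on {0..T} A"
    and B_cont: "continuous_on {0..T} B"
    and P_spd: "spd P"
    and Xe_spd: "spd Xe"
    and kappa_cont: "\<forall>j\<in>{1..nq}. continuous_on {0..T} (\<kappa> j)"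
    and kappa_pos: "\<forall>j\<in>{1..nq}. \<forall>s\<in>{0..T}. \<kappa> j s > 0"
    and q_ode: "\<forall>j\<in>{1..nq}. \<forall>s\<in>{0..T}.
                  (q j has_vector_derivative (A s *v q j s + B s *v p)) (at s within {0..T})"
    and Q_ode: "\<forall>j\<in>{1..nq}. \<forall>s\<in>{0..T}.
                  (Q j has_vector_derivative
                     (A s ** Q j s + Q j s ** transpose (A s)
                      - ((1 / \<kappa> j s) *\<^sub>R (B s ** P ** transpose (B s)) + \<kappa> j s *\<^sub>R Q j s)))
                  (at s within {0..T})"
    and Q_spd: "\<forall>j\<in>{1..nq}. \<forall>s\<in>{0..T}. spd (Q j s)"
    and q_end: "\<forall>j\<in>{1..nq}. q j T = xe"
    and Q_end: "\<forall>j\<in>{1..nq}. Q j T = Xe"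
    and t_in: "t \<in> {0..T}"
    and i_in: "i \<in> {1..nq}"
    and u_adm: "ustar \<in> admissible_controls t T (ellipsoid p P)"
    and x_ac: "abs_continuous_on t T xstar"
    and x_ode: "AE s in lebesgue. s \<in> {t<..<T} \<longrightarrow>
                  (xstar has_vector_derivative (A s *v xstar s + B s *v ustar s)) (at s)"
    and x_end: "xstar T \<in> frontier (ellipsoid xe Xe)"
    and u_max: "AE s in lebesgue. s \<in> {t<..<T} \<longrightarrow>
                  is_arg_max
                    (\<lambda>u. (- (minvsqrt (Q i s) *v (minvsqrt (Q i s) *v (xstar s - q i s))))
                           \<bullet> (B s *v u))
                    (\<lambda>u. u \<in> ellipsoid p P) (ustar s)"
    and kappa_choice: "\<forall>s\<in>{t..T}.
                  minvsqrt (Q i s) *v (xstar s - q i s) \<noteq> 0 \<longrightarrow>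
                  \<kappa> i s =
                    norm (msqrt (minvsqrt (Q i s) ** B s ** P ** transpose (B s) ** minvsqrt (Q i s))
                          *v (minvsqrt (Q i s) *v (xstar s - q i s)))
                    / norm (minvsqrt (Q i s) *v (xstar s - q i s))"
  shows "xstar t \<in> frontier (ellipsoid (q i t) (Q i t))
           \<inter> frontier (backward_reach A B (ellipsoid p P) (ellipsoid xe Xe) T t)"
proof -
  interpret ellipsoidal_tube T A B p P "\<kappa> i" "q i" "Q i"
    using A_cont B_cont P_spd kappa_cont kappa_pos q_ode Q_ode Q_spd i_in by unfold_locales auto
  have terminal: "ellipsoid xe Xe = ellipsoid (q i T) (Q i T)" using q_end Q_end i_in by simp
  have sol: "is_solution A B t T ustar xstar" using x_ac x_ode unfolding is_solution_def by blast
  have "level xstar T = 1" using x_end unfolding terminal by (simp add: level_def frontier_ellipsoid)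
  then have "level xstar t = 1" by (rule level_eq_one_along_optimal[OF t_in sol u_max kappa_choice])
  then have on_ellipsoid: "xstar t \<in> frontier (ellipsoid (q i t) (Q i t))"
    by (simp add: level_def frontier_ellipsoid)
  have "xstar T \<in> ellipsoid xe Xe" using x_end unfolding terminal by (simp add: frontier_ellipsoid mem_ellipsoid_iff)
  then have "xstar t \<in> backward_reach A B (ellipsoid p P) (ellipsoid xe Xe) T t"
    using u_adm sol unfolding backward_reach_def by blast
  then show ?thesis
    using on_ellipsoid backward_reach_subset_ellipsoid[OF t_in] mem_frontier_of_subset
    unfolding terminal by blast
qed

end
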